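(* Fix integers $n \ge 3$, $1 \le i < j \le n-1$, and positive integers $e_1, \ldots, e_{n-1}$. For a prime $p$ and integers $a_{rs}$ ($1 \le r < s \le n-1$) with $0 \le a_{rs} < p^{e_r - 1}$, let $A = A(p,(a_{rs}))$ be the $n\times n$ upper triangular integer matrix with $A_{rr} = p^{e_r}$ for $r < n$, $A_{nn} = 1$, $A_{rs} = p\,a_{rs}$ for $1 \le r < s \le n-1$, last column $(1,\ldots,1)^T$, and zeros below the diagonal; denote its columns by $v_1, \ldots, v_n$. Then the number of choices of the variables $\{a_{rs} : 1 \le r < s \le i\} \cup \{a_{rj} : 1 \le r \le i\}$ (each with $0 \le a_{rs} < p^{e_r-1}$) such that $v_i \circ v_j$ lies in the $\mathbb{Z}$-column span of $A$ is a polynomial in $p$; that is, there is $P \in \mathbb{Q}[x]$ (depending on $n,i,j,e_1,\ldots,e_{n-1}$) with this number equal to $P(p)$ for every prime $p$.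
   Context: For vectors $x=(x_1,\ldots,x_n)^T$, $y=(y_1,\ldots,y_n)^T$, $x \circ y = (x_1y_1, \ldots, x_ny_n)^T$ denotes the componentwise product. The condition $v_i \circ v_j \in \mathrm{Col}(A)$ means $v_i\circ v_j = A x$ for some $x \in \mathbb{Z}^n$; it only involves the listed variables. *)

theory Defs
  imports Main "HOL-Computational_Algebra.Polynomial" "HOL-Computational_Algebra.Primes"
begin

text \<open>Indices are 1-based. The entry A_{rs} of the n x n matrix A(p,(a_{rs})).\<close>
definition Amat :: "nat \<Rightarrow> nat \<Rightarrow> (nat \<Rightarrow> nat) \<Rightarrow> (nat \<Rightarrow> nat \<Rightarrow> int) \<Rightarrow> nat \<Rightarrow> nat \<Rightarrow> int" where
  "Amat n p e a r s =
     (if s = n then 1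
      else if r = s then int p ^ e r
      else if r < s then int p * a r s
      else 0)"

text \<open>Column k of A is v_k, i.e. (v_k)_r = A r k.
  w lies in the Z-column span of A.\<close>
definition in_col_span :: "nat \<Rightarrow> (nat \<Rightarrow> nat \<Rightarrow> int) \<Rightarrow> (nat \<Rightarrow> int) \<Rightarrow> bool" where
  "in_col_span n A w \<longleftrightarrow>
     (\<exists>x :: nat \<Rightarrow> int. \<forall>r\<in>{1..n}. w r = (\<Sum>s=1..n. A r s * x s))"

definition full_assign :: "nat \<Rightarrow> nat \<Rightarrow> (nat \<Rightarrow> nat) \<Rightarrow> (nat \<Rightarrow> nat \<Rightarrow> int) set" where
  "full_assign n p e =
     {a. (\<forall>r s. 1 \<le> r \<and> r < s \<and> s \<le> n - 1 \<longrightarrow> 0 \<le> a r s \<and> a r s < int p ^ (e r - 1)) \<and>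
         (\<forall>r s. \<not> (1 \<le> r \<and> r < s \<and> s \<le> n - 1) \<longrightarrow> a r s = 0)}"

definition listed_vars :: "nat \<Rightarrow> nat \<Rightarrow> (nat \<times> nat) set" where
  "listed_vars i j = {(r, s). 1 \<le> r \<and> r < s \<and> s \<le> i} \<union> {(r, s). s = j \<and> 1 \<le> r \<and> r \<le> i}"

definition restrict_vars :: "(nat \<times> nat) set \<Rightarrow> (nat \<Rightarrow> nat \<Rightarrow> int) \<Rightarrow> (nat \<Rightarrow> nat \<Rightarrow> int)" where
  "restrict_vars L a = (\<lambda>r s. if (r, s) \<in> L then a r s else 0)"

text \<open>Since the condition only involves the listed
  variables, a choice counts iff it extends to some admissible full assignment
  satisfying the condition.\<close>
definition good_choices :: "nat \<Rightarrow> nat \<Rightarrow> nat \<Rightarrow> (nat \<Rightarrow> nat) \<Rightarrow> nat \<Rightarrow> (nat \<Rightarrow> nat \<Rightarrow> int) set" where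
  "good_choices n i j e p =
     restrict_vars (listed_vars i j) `
       {a \<in> full_assign n p e.
          in_col_span n (Amat n p e a) (\<lambda>r. Amat n p e a r i * Amat n p e a r j)}"

end

theory Submission
  imports Defs "HOL-Library.FuncSet" "HOL-Library.Function_Algebras"
begin

text \<open>
  Since \<open>A\<close> is upper triangular with nonzero diagonal, \<open>v\<^sub>i \<circ> v\<^sub>j\<close> lies in the column span iff
  the triangular system in rows \<open>1..i\<close> is solvable over \<open>\<int>\<close>. Its last row forces
  \<open>y\<^sub>i = p a\<^sub>i\<^sub>j\<close>; back-substituting, row \<open>t < i\<close> asks that \<open>p\<^bsup>e\<^sub>t\<^esup>\<close> divide
  \<open>p\<^sup>2 a\<^sub>t\<^sub>i (a\<^sub>t\<^sub>j - a\<^sub>i\<^sub>j) - p \<Sum>\<^sub>t\<^sub><\<^sub>s\<^sub><\<^sub>i a\<^sub>t\<^sub>s y\<^sub>s\<close>.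
  Solving the rows from \<open>i - 1\<close> down to \<open>1\<close>, the number of admissible values of the
  variables of the remaining rows depends on the already determined \<open>y\<^sub>s\<close> only through their
  minimal \<open>p\<close>-adic valuation (capped at \<open>e\<^sub>1 + \<dots> + e\<^sub>r\<close>), and on \<open>a\<^sub>i\<^sub>j\<close> only through the
  positions of certain nonzero base-\<open>p\<close> digits. Each row contributes a polynomial weight,
  because exactly \<open>p\<^bsup>g-w\<^esup> - p\<^bsup>g-w-1\<^esup>\<close> residues modulo \<open>p\<^sup>g\<close> have valuation \<open>w < g\<close>, and
  the number of \<open>a\<^sub>i\<^sub>j\<close> with a given digit pattern is a product of factors \<open>1\<close>, \<open>p - 1\<close>, \<open>p\<close>.
\<close>

text \<open>The \<open>p\<close>-adic valuation of \<open>z\<close> capped at \<open>L\<close>; the cap makes \<open>capval p L 0 = L\<close>.\<close>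

definition capval :: "nat \<Rightarrow> nat \<Rightarrow> int \<Rightarrow> nat" where
  "capval p L z = Max {m. m \<le> L \<and> int p ^ m dvd z}"

lemma capval_candidates_finite: "finite {m. m \<le> L \<and> int p ^ m dvd z}"
  by (rule finite_subset[of _ "{..L}"]) auto

lemma capval_in_candidates: "capval p L z \<in> {m. m \<le> L \<and> int p ^ m dvd z}"
  unfolding capval_def by (rule Max_in[OF capval_candidates_finite]) (auto intro: exI[of _ 0])

lemma capval_le: "capval p L z \<le> L" using capval_in_candidates by auto
lemma capval_dvd: "int p ^ capval p L z dvd z" using capval_in_candidates by auto

lemma le_capval_iff: "m \<le> L \<Longrightarrow> (m \<le> capval p L z \<longleftrightarrow> int p ^ m dvd z)"
proof
  assume "m \<le> capval p L z"
  then have "int p ^ m dvd int p ^ capval p L z" by (rule le_imp_power_dvd)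
  then show "int p ^ m dvd z" using capval_dvd dvd_trans by blast
next
  assume "m \<le> L" "int p ^ m dvd z"
  then show "m \<le> capval p L z" unfolding capval_def by (intro Max_ge[OF capval_candidates_finite]) auto
qed

lemma capval_eqI:
  assumes "t \<le> L" "\<And>m. m \<le> L \<Longrightarrow> (int p ^ m dvd z \<longleftrightarrow> m \<le> t)"
  shows "capval p L z = t"
proof -
  have "t \<le> capval p L z" using assms le_capval_iff by blast
  moreover have "capval p L z \<le> t" using assms(2)[OF capval_le] capval_dvd by blast
  ultimately show ?thesis by simp
qed

lemma capval_cong:
  assumes "\<And>m. m \<le> L \<Longrightarrow> (int p ^ m dvd z \<longleftrightarrow> int p ^ m dvd z')"
  shows "capval p L z = capval p L z'"
proof (rule capval_eqI)
  show "capval p L z' \<le> L" by (rule capval_le)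
  fix m assume "m \<le> L"
  then show "int p ^ m dvd z \<longleftrightarrow> m \<le> capval p L z'" using assms le_capval_iff by blast
qed

lemma capval_eq_if_dvd_diff:
  assumes "int p ^ L dvd z - z'"
  shows "capval p L z = capval p L z'"
proof (rule capval_cong)
  fix m assume "m \<le> L"
  then have "int p ^ m dvd int p ^ L" by (rule le_imp_power_dvd)
  then have h: "int p ^ m dvd z - z'" using assms by (rule dvd_trans)
  show "int p ^ m dvd z \<longleftrightarrow> int p ^ m dvd z'"
  proof
    assume "int p ^ m dvd z" then show "int p ^ m dvd z'" using h dvd_diff[of _ z "z - z'"] by simp
  next
    assume "int p ^ m dvd z'" then show "int p ^ m dvd z" using h dvd_add[of _ "z - z'" z'] by simp
  qed
qed

lemma capval_smaller_cap: assumes "L' \<le> L" shows "capval p L' z = min L' (capval p L z)"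
proof (rule capval_eqI)
  fix m assume "m \<le> L'"
  then show "int p ^ m dvd z \<longleftrightarrow> m \<le> min L' (capval p L z)" using assms le_capval_iff[of m L p z] by auto
qed simp

lemma capval_uminus: "capval p L (- z) = capval p L z"
  by (rule capval_cong) simp

lemma capval_0: "capval p L 0 = L"
  by (rule capval_eqI) auto

lemma not_dvd_Suc_capval: "capval p L z < L \<Longrightarrow> \<not> int p ^ (Suc (capval p L z)) dvd z"
  using le_capval_iff[of "Suc (capval p L z)" L p z] by auto

lemma capval_eq_iff:
  "capval p C z = v \<longleftrightarrow> v \<le> C \<and> int p ^ v dvd z \<and> (v < C \<longrightarrow> \<not> int p ^ Suc v dvd z)"
proof
  assume "capval p C z = v"
  then show "v \<le> C \<and> int p ^ v dvd z \<and> (v < C \<longrightarrow> \<not> int p ^ Suc v dvd z)"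
    using capval_le capval_dvd not_dvd_Suc_capval by blast
next
  assume v: "v \<le> C \<and> int p ^ v dvd z \<and> (v < C \<longrightarrow> \<not> int p ^ Suc v dvd z)"
  show "capval p C z = v"
  proof (rule capval_eqI)
    fix m assume "m \<le> C"
    show "int p ^ m dvd z \<longleftrightarrow> m \<le> v"
    proof
      assume m: "int p ^ m dvd z"
      show "m \<le> v"
      proof (rule ccontr)
        assume "\<not> m \<le> v"
        then have "v < C" using \<open>m \<le> C\<close> by simp
        moreover have "int p ^ Suc v dvd int p ^ m" using \<open>\<not> m \<le> v\<close> by (intro le_imp_power_dvd) simp
        ultimately show False using v m dvd_trans by blast
      qed
    next
      assume "m \<le> v"
      then have "int p ^ m dvd int p ^ v" by (rule le_imp_power_dvd)
      then show "int p ^ m dvd z" using v dvd_trans by blast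
    qed
  qed (use v in simp)
qed

lemma pow_dvd_pow_mult_iff:
  assumes "prime p" "\<not> int p dvd y"
  shows "int p ^ m dvd int p ^ s * y \<longleftrightarrow> m \<le> s"
proof
  assume h: "int p ^ m dvd int p ^ s * y"
  show "m \<le> s"
  proof (rule ccontr)
    assume "\<not> m \<le> s"
    then have "int p ^ Suc s dvd int p ^ m" by (intro le_imp_power_dvd) simp
    then have "int p ^ s * int p dvd int p ^ s * y" using h dvd_trans by (metis power_Suc2)
    moreover have "int p ^ s \<noteq> 0" using assms(1) by (simp add: prime_gt_0_nat)
    ultimately have "int p dvd y" by (metis dvd_mult_cancel_left mult_eq_0_iff)
    with assms show False by simp
  qed
next
  assume "m \<le> s" then show "int p ^ m dvd int p ^ s * y"
    by (simp add: le_imp_power_dvd)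
qed

lemma capval_factor:
  assumes "prime p" "capval p C c < C"
  obtains c' where "c = int p ^ capval p C c * c'" "\<not> int p dvd c'"
proof -
  obtain c' where c: "c = int p ^ capval p C c * c'" using capval_dvd by (metis dvd_def)
  have "\<not> int p dvd c'"
  proof
    assume "int p dvd c'"
    then have "int p ^ Suc (capval p C c) dvd c" by (subst c) (simp add: mult_dvd_mono)
    with not_dvd_Suc_capval[OF assms(2)] show False by simp
  qed
  with c that show ?thesis by blast
qed

lemma capval_pow_mult:
  assumes "prime p" "L \<le> C"
  shows "capval p L (int p ^ a * c * d) = min L (a + capval p C c + capval p C d)"
proof (cases "capval p C c < C \<and> capval p C d < C")
  case True
  obtain c' where c: "c = int p ^ capval p C c * c'" "\<not> int p dvd c'" using capval_factor assms True by blast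
  obtain d' where d: "d = int p ^ capval p C d * d'" "\<not> int p dvd d'" using capval_factor assms True by blast
  have pp: "prime (int p)" using assms by simp
  have nd: "\<not> int p dvd c' * d'" using c(2) d(2) pp by (simp add: prime_dvd_mult_iff)
  define u where "u = capval p C c"
  define w where "w = capval p C d"
  have eq: "int p ^ a * c * d = int p ^ (a + u + w) * (c' * d')"
  proof -
    have "int p ^ a * c * d = int p ^ a * (int p ^ u * c') * (int p ^ w * d')"
      using c(1)[folded u_def] d(1)[folded w_def] by simp
    also have "\<dots> = int p ^ (a + u + w) * (c' * d')" by (simp add: power_add algebra_simps)
    finally show ?thesis .
  qed
  show ?thesis
    unfolding u_def[symmetric] w_def[symmetric] eq
  proof (rule capval_eqI)
    fix m assume "m \<le> L"
    show "int p ^ m dvd int p ^ (a + u + w) * (c' * d') \<longleftrightarrow> m \<le> min L (a + u + w)"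
      using pow_dvd_pow_mult_iff[OF assms(1) nd, of m "a+u+w"] \<open>m \<le> L\<close> by auto
  qed simp
next
  case False
  then have "capval p C c = C \<or> capval p C d = C" using capval_le[of p C c] capval_le[of p C d] by linarith
  then have cd: "int p ^ C dvd c \<or> int p ^ C dvd d" using capval_dvd[of p C c] capval_dvd[of p C d] by auto
  have h: "int p ^ m dvd int p ^ a * c * d" if "m \<le> L" for m
  proof -
    have "int p ^ m dvd int p ^ C" using that assms(2) by (intro le_imp_power_dvd) simp
    then have "int p ^ m dvd c \<or> int p ^ m dvd d" using cd dvd_trans by blast
    then show ?thesis by (metis dvd_mult dvd_mult2 mult.assoc)
  qed
  have "min L (a + capval p C c + capval p C d) = L"
    using \<open>capval p C c = C \<or> capval p C d = C\<close> assms(2) by auto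
  then show ?thesis using h by (intro capval_eqI) auto
qed

definition poly_on_primes :: "(nat \<Rightarrow> rat) \<Rightarrow> bool" where
  "poly_on_primes f \<longleftrightarrow> (\<exists>P. \<forall>p. prime p \<longrightarrow> f p = poly P (of_nat p))"

lemma poly_on_primes_const: "poly_on_primes (\<lambda>p. c)"
  unfolding poly_on_primes_def by (rule exI[of _ "[:c:]"]) simp

lemma poly_on_primes_id: "poly_on_primes (\<lambda>p. of_nat p)"
  unfolding poly_on_primes_def by (rule exI[of _ "[:0,1:]"]) simp

lemma poly_on_primes_add: "poly_on_primes f \<Longrightarrow> poly_on_primes g \<Longrightarrow> poly_on_primes (\<lambda>p. f p + g p)"
proof -
  assume "poly_on_primes f" "poly_on_primes g"
  then obtain P Q where "\<forall>p. prime p \<longrightarrow> f p = poly P (of_nat p)" "\<forall>p. prime p \<longrightarrow> g p = poly Q (of_nat p)"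
    unfolding poly_on_primes_def by blast
  then show ?thesis unfolding poly_on_primes_def by (intro exI[of _ "P + Q"]) simp
qed

lemma poly_on_primes_diff: "poly_on_primes f \<Longrightarrow> poly_on_primes g \<Longrightarrow> poly_on_primes (\<lambda>p. f p - g p)"
proof -
  assume "poly_on_primes f" "poly_on_primes g"
  then obtain P Q where "\<forall>p. prime p \<longrightarrow> f p = poly P (of_nat p)" "\<forall>p. prime p \<longrightarrow> g p = poly Q (of_nat p)"
    unfolding poly_on_primes_def by blast
  then show ?thesis unfolding poly_on_primes_def by (intro exI[of _ "P - Q"]) simp
qed

lemma poly_on_primes_mult: "poly_on_primes f \<Longrightarrow> poly_on_primes g \<Longrightarrow> poly_on_primes (\<lambda>p. f p * g p)"
proof -
  assume "poly_on_primes f" "poly_on_primes g"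
  then obtain P Q where "\<forall>p. prime p \<longrightarrow> f p = poly P (of_nat p)" "\<forall>p. prime p \<longrightarrow> g p = poly Q (of_nat p)"
    unfolding poly_on_primes_def by blast
  then show ?thesis unfolding poly_on_primes_def by (intro exI[of _ "P * Q"]) simp
qed

lemma poly_on_primes_power: "poly_on_primes f \<Longrightarrow> poly_on_primes (\<lambda>p. f p ^ k)"
proof (induction k)
  case 0 then show ?case using poly_on_primes_const by simp
next
  case (Suc k) then show ?case using poly_on_primes_mult[of f "\<lambda>p. f p ^ k"] by simp
qed

lemma poly_on_primes_sum: "finite A \<Longrightarrow> (\<And>x. x \<in> A \<Longrightarrow> poly_on_primes (f x)) \<Longrightarrow> poly_on_primes (\<lambda>p. \<Sum>x\<in>A. f x p)"
proof (induction A rule: finite_induct)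
  case empty then show ?case using poly_on_primes_const by simp
next
  case (insert x F) then show ?case using poly_on_primes_add[of "f x" "\<lambda>p. \<Sum>x\<in>F. f x p"] by simp
qed

lemma poly_on_primes_if: "poly_on_primes f \<Longrightarrow> poly_on_primes g \<Longrightarrow> poly_on_primes (\<lambda>p. if b then f p else g p)"
  by (cases b) simp_all

lemma poly_on_primes_cong: "poly_on_primes f \<Longrightarrow> (\<And>p. prime p \<Longrightarrow> f p = g p) \<Longrightarrow> poly_on_primes g"
proof -
  assume "poly_on_primes f" "\<And>p. prime p \<Longrightarrow> f p = g p"
  then show ?thesis unfolding poly_on_primes_def by auto
qed

lemma poly_on_primes_choice:
  assumes "\<And>x. poly_on_primes (f x)"
  shows "\<exists>Q. \<forall>x p. prime p \<longrightarrow> f x p = poly (Q x) (of_nat p)"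
proof -
  have "\<forall>x. \<exists>P. \<forall>p. prime p \<longrightarrow> f x p = poly P (of_nat p)" using assms unfolding poly_on_primes_def by blast
  then show ?thesis by (rule choice)
qed

definition assigns :: "(nat \<times> nat) set \<Rightarrow> (nat \<Rightarrow> int) \<Rightarrow> (nat \<Rightarrow> nat \<Rightarrow> int) set" where
  "assigns I bd = {f. (\<forall>r s. (r, s) \<in> I \<longrightarrow> 0 \<le> f r s \<and> f r s < bd r) \<and> (\<forall>r s. (r, s) \<notin> I \<longrightarrow> f r s = 0)}"

definition single_assign :: "nat \<Rightarrow> nat \<Rightarrow> int \<Rightarrow> (nat \<Rightarrow> nat \<Rightarrow> int)" where
  "single_assign r s y = (\<lambda>r' s'. if r' = r \<and> s' = s then y else 0)"

lemma assigns_range: "f \<in> assigns J bd \<Longrightarrow> (r, s) \<in> J \<Longrightarrow> 0 \<le> f r s \<and> f r s < bd r"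
  by (simp add: assigns_def)

lemma finite_assigns: assumes "finite I" shows "finite (assigns I bd)"
proof -
  let ?G = "\<lambda>v. (\<lambda>r s. if (r, s) \<in> I then v (r, s) else 0 :: int)"
  have "assigns I bd \<subseteq> ?G ` (PiE I (\<lambda>q. {0..<bd (fst q)}))"
  proof
    fix f assume f: "f \<in> assigns I bd"
    define v :: "nat \<times> nat \<Rightarrow> int" where "v = restrict (\<lambda>q. f (fst q) (snd q)) I"
    have "v \<in> PiE I (\<lambda>q. {0..<bd (fst q)})" unfolding v_def restrict_PiE_iff
    proof
      fix q assume "q \<in> I"
      then show "f (fst q) (snd q) \<in> {0..<bd (fst q)}" using assigns_range[OF f, of "fst q" "snd q"] by simp
    qed
    moreover have "f = ?G v" using f by (auto simp: assigns_def fun_eq_iff v_def)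
    ultimately show "f \<in> ?G ` (PiE I (\<lambda>q. {0..<bd (fst q)}))" by blast
  qed
  moreover have "finite (PiE I (\<lambda>q. {0..<bd (fst q)}))" using assms by (intro finite_PiE) auto
  ultimately show ?thesis using finite_subset by blast
qed

lemma assigns_outside: "f \<in> assigns J bd \<Longrightarrow> (r, s) \<notin> J \<Longrightarrow> f r s = 0"
  by (simp add: assigns_def)

lemma add_in_assigns:
  assumes "I \<inter> J = {}" "f1 \<in> assigns I bd" "f2 \<in> assigns J bd"
  shows "f1 + f2 \<in> assigns (I \<union> J) bd"
proof -
  have A: "0 \<le> f1 r s + f2 r s \<and> f1 r s + f2 r s < bd r" if h: "(r, s) \<in> I \<union> J" for r s
  proof (cases "(r, s) \<in> I")
    case True
    then have "(r, s) \<notin> J" using assms(1) by blast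
    then show ?thesis using True assigns_outside[OF assms(3)] assigns_range[OF assms(2)] by auto
  next
    case False
    then have "(r, s) \<in> J" using h by blast
    then show ?thesis using False assigns_outside[OF assms(2)] assigns_range[OF assms(3)] by auto
  qed
  have B: "f1 r s + f2 r s = 0" if "(r, s) \<notin> I \<union> J" for r s
    using that assigns_outside[OF assms(2)] assigns_outside[OF assms(3)] by auto
  show ?thesis unfolding assigns_def plus_fun_def using A B by blast
qed

lemma restrict_vars_add_left:
  assumes "I \<inter> J = {}" "f1 \<in> assigns I bd" "f2 \<in> assigns J bd"
  shows "restrict_vars I (f1 + f2) = f1"
proof (intro ext)
  fix r s show "restrict_vars I (f1 + f2) r s = f1 r s"
  proof (cases "(r, s) \<in> I")
    case True
    then have "(r, s) \<notin> J" using assms(1) by blast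
    then show ?thesis using True assigns_outside[OF assms(3)] by (simp add: restrict_vars_def)
  next
    case False
    then show ?thesis using assigns_outside[OF assms(2)] by (simp add: restrict_vars_def)
  qed
qed

lemma restrict_vars_add_right:
  assumes "I \<inter> J = {}" "f1 \<in> assigns I bd" "f2 \<in> assigns J bd"
  shows "restrict_vars J (f1 + f2) = f2"
  using restrict_vars_add_left[of J I f2 bd f1] assms by (simp add: add.commute Int_commute)

lemma restrict_vars_in_assigns:
  assumes "b \<in> assigns K bd" "I \<subseteq> K"
  shows "restrict_vars I b \<in> assigns I bd"
  using assms unfolding assigns_def restrict_vars_def by auto

lemma restrict_vars_id: "b \<in> assigns I bd \<Longrightarrow> restrict_vars I b = b"
  by (auto simp: assigns_def restrict_vars_def fun_eq_iff)

lemma assigns_mono: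
  assumes "I \<subseteq> K" "\<And>r. 0 < bd r"
  shows "assigns I bd \<subseteq> assigns K bd"
proof
  fix f assume f: "f \<in> assigns I bd"
  have "0 \<le> f r s \<and> f r s < bd r" if "(r, s) \<in> K" for r s
    using assigns_range[OF f, of r s] assigns_outside[OF f, of r s] assms(2)[of r] by (cases "(r, s) \<in> I") auto
  moreover have "f r s = 0" if "(r, s) \<notin> K" for r s using that assms(1) assigns_outside[OF f] by blast
  ultimately show "f \<in> assigns K bd" unfolding assigns_def by blast
qed

lemma add_restrict_vars_eq:
  assumes "I \<inter> J = {}" "b \<in> assigns (I \<union> J) bd"
  shows "(restrict_vars I b + restrict_vars J b) = b"
proof (intro ext)
  fix r s show "(restrict_vars I b + restrict_vars J b) r s = b r s"
    using assigns_outside[OF assms(2), of r s] assms(1)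
    by (cases "(r, s) \<in> I"; cases "(r, s) \<in> J") (auto simp: restrict_vars_def)
qed

lemma sum_assigns_Un:
  assumes "I \<inter> J = {}"
  shows "(\<Sum>f\<in>assigns (I \<union> J) bd. \<phi> f) = (\<Sum>f1\<in>assigns I bd. \<Sum>f2\<in>assigns J bd. \<phi> (f1 + f2))"
proof -
  have "(\<Sum>f1\<in>assigns I bd. \<Sum>f2\<in>assigns J bd. \<phi> (f1 + f2)) = (\<Sum>(f1, f2)\<in>assigns I bd \<times> assigns J bd. \<phi> (f1 + f2))"
    by (rule sum.cartesian_product)
  also have "\<dots> = (\<Sum>f\<in>assigns (I \<union> J) bd. \<phi> f)"
  proof (rule sum.reindex_bij_witness[of _ "\<lambda>f. (restrict_vars I f, restrict_vars J f)" "\<lambda>(f1, f2). f1 + f2"])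
    fix a assume "a \<in> assigns I bd \<times> assigns J bd"
    then show "(restrict_vars I (case a of (f1, f2) \<Rightarrow> f1 + f2), restrict_vars J (case a of (f1, f2) \<Rightarrow> f1 + f2)) = a"
      using assms restrict_vars_add_left restrict_vars_add_right by (cases a) auto
  next
    fix a assume "a \<in> assigns I bd \<times> assigns J bd"
    then show "(case a of (f1, f2) \<Rightarrow> f1 + f2) \<in> assigns (I \<union> J) bd"
      using assms add_in_assigns by (cases a) auto
  next
    fix b assume "b \<in> assigns (I \<union> J) bd"
    then show "(case (restrict_vars I b, restrict_vars J b) of (f1, f2) \<Rightarrow> f1 + f2) = b"
      using add_restrict_vars_eq assms by simp
  next
    fix b assume "b \<in> assigns (I \<union> J) bd"
    then show "(restrict_vars I b, restrict_vars J b) \<in> assigns I bd \<times> assigns J bd"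
      using restrict_vars_in_assigns by auto
  next
    fix a assume "a \<in> assigns I bd \<times> assigns J bd"
    then show "\<phi> (case a of (f1, f2) \<Rightarrow> f1 + f2) = (case a of (f1, f2) \<Rightarrow> \<phi> (f1 + f2))"
      by (cases a) auto
  qed
  finally show ?thesis by simp
qed

lemma sum_assigns_singleton:
  "(\<Sum>f\<in>assigns {(r, s)} bd. \<phi> f) = (\<Sum>y\<in>{0..<bd r}. \<phi> (single_assign r s y))"
proof (rule sum.reindex_bij_witness[of _ "single_assign r s" "\<lambda>f. f r s"])
  fix a assume "a \<in> assigns {(r, s)} bd"
  then show "single_assign r s (a r s) = a" by (auto simp: assigns_def single_assign_def fun_eq_iff)
next
  fix a assume "a \<in> assigns {(r, s)} bd"
  then show "a r s \<in> {0..<bd r}" by (auto simp: assigns_def)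
next
  fix a assume "a \<in> assigns {(r, s)} bd"
  then have "single_assign r s (a r s) = a" by (auto simp: assigns_def single_assign_def fun_eq_iff)
  then show "\<phi> (single_assign r s (a r s)) = \<phi> a" by simp
next
  fix b assume "b \<in> {0..<bd r}"
  then show "single_assign r s b r s = b" by (simp add: single_assign_def)
next
  fix b assume "b \<in> {0..<bd r}"
  then show "single_assign r s b \<in> assigns {(r, s)} bd" by (auto simp: assigns_def single_assign_def)
qed

lemma assigns_empty: "assigns {} bd = {\<lambda>_ _. 0}"
  by (auto simp: assigns_def fun_eq_iff)

lemma card_assigns_row:
  assumes "finite I" "\<And>q. q \<in> I \<Longrightarrow> fst q = r" "0 \<le> bd r"
  shows "int (card (assigns I bd)) = bd r ^ card I"
  using assms
proof (induction I rule: finite_induct)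
  case empty
  then show ?case by (simp add: assigns_empty)
next
  case (insert q I)
  have "fst q = r" using insert.prems(1) by simp
  then obtain s where q: "q = (r, s)" by (metis prod.collapse)
  have "card (assigns (insert q I) bd) = (\<Sum>f\<in>assigns ({q} \<union> I) bd. 1)" by simp
  also have "\<dots> = (\<Sum>f1\<in>assigns {q} bd. \<Sum>f2\<in>assigns I bd. 1)"
    by (rule sum_assigns_Un) (use insert in auto)
  also have "\<dots> = card (assigns {q} bd) * card (assigns I bd)" by simp
  finally have "int (card (assigns (insert q I) bd)) = int (card (assigns {q} bd)) * int (card (assigns I bd))" by simp
  moreover have "card (assigns {q} bd) = (\<Sum>y\<in>{0..<bd r}. (1::nat))" unfolding q
    using sum_assigns_singleton[where \<phi>="\<lambda>_. (1::nat)" and r=r and s=s and bd=bd] by simp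
  moreover have "int (\<Sum>y\<in>{0..<bd r}. (1::nat)) = bd r" using insert.prems by simp
  ultimately show ?case using insert by simp
qed

lemma card_filter_sum:
  assumes "finite S"
  shows "(of_nat (card {x\<in>S. Q x}) :: 'a::semiring_1) = (\<Sum>x\<in>S. of_bool (Q x))"
  using assms by (simp add: Collect_conj_eq)

lemma sum_group_card:
  assumes "finite S" "finite W" "f ` S \<subseteq> W"
  shows "(\<Sum>x\<in>S. h (f x)) = (\<Sum>w\<in>W. of_nat (card {x\<in>S. f x = w}) * h w)"
proof -
  have "(\<Sum>x\<in>S. h (f x)) = (\<Sum>w\<in>W. \<Sum>x\<in>{x. x \<in> S \<and> f x = w}. h (f x))"
    using sum.group[OF assms, of "\<lambda>x. h (f x)"] by simp
  also have "\<dots> = (\<Sum>w\<in>W. of_nat (card {x\<in>S. f x = w}) * h w)"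
    by (intro sum.cong refl) simp
  finally show ?thesis .
qed

lemma card_multiples_below:
  assumes "prime p" "m \<le> g"
  shows "card {y\<in>{0..<int p ^ g}. int p ^ m dvd y} = p ^ (g - m)"
proof -
  have pos: "0 < int p ^ m" using assms by (simp add: prime_gt_0_nat)
  have eqg: "int p ^ g = int p ^ m * int p ^ (g - m)" using assms(2) by (simp add: power_add[symmetric])
  have "{y\<in>{0..<int p ^ g}. int p ^ m dvd y} = (\<lambda>t. int p ^ m * t) ` {0..<int p ^ (g - m)}"
  proof (intro set_eqI iffI)
    fix y assume "y \<in> {y\<in>{0..<int p ^ g}. int p ^ m dvd y}"
    then have yy: "int p ^ m dvd y" "0 \<le> y" "y < int p ^ g" by auto
    then obtain t where "y = int p ^ m * t" by (auto elim: dvdE)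
    with yy have y: "y = int p ^ m * t" "0 \<le> y" "y < int p ^ g" by auto
    have "0 \<le> t" using y pos by (simp add: zero_le_mult_iff)
    moreover have "t < int p ^ (g - m)" using y pos eqg by (metis mult_less_cancel_left_pos)
    ultimately show "y \<in> (\<lambda>t. int p ^ m * t) ` {0..<int p ^ (g - m)}" using y by auto
  next
    fix y assume "y \<in> (\<lambda>t. int p ^ m * t) ` {0..<int p ^ (g - m)}"
    then obtain t where t0: "t \<in> {0..<int p ^ (g - m)}" "y = int p ^ m * t" by blast
    then have t: "y = int p ^ m * t" "0 \<le> t" "t < int p ^ (g - m)" by auto
    then show "y \<in> {y\<in>{0..<int p ^ g}. int p ^ m dvd y}" using pos eqg by auto
  qed
  moreover have "inj_on (\<lambda>t. int p ^ m * t) {0..<int p ^ (g - m)}" using pos by (auto simp: inj_on_def)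
  ultimately have "card {y\<in>{0..<int p ^ g}. int p ^ m dvd y} = card {0..<int p ^ (g - m)}"
    by (simp add: card_image)
  also have "\<dots> = p ^ (g - m)" by (simp add: nat_power_eq)
  finally show ?thesis .
qed

lemma bij_betw_affine_mod:
  assumes "prime p" "\<not> int p dvd u"
  shows "bij_betw (\<lambda>y. (y * u + R) mod int p ^ g) {0..<int p ^ g} {0..<int p ^ g}"
proof -
  let ?S = "{0..<int p ^ g}"
  let ?h = "\<lambda>y. (y * u + R) mod int p ^ g"
  have pos: "0 < int p ^ g" using assms by (simp add: prime_gt_0_nat)
  have cop: "coprime (int p ^ g) u"
    using prime_imp_coprime[of "int p" u] assms by simp
  have inj: "inj_on ?h ?S"
  proof (rule inj_onI)
    fix a b assume a: "a \<in> ?S" and b: "b \<in> ?S" and e: "?h a = ?h b"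
    then have "int p ^ g dvd (a * u + R) - (b * u + R)" by (simp add: mod_eq_dvd_iff)
    then have "int p ^ g dvd (a - b) * u" by (simp add: algebra_simps)
    then have "int p ^ g dvd (a - b)" using cop by (simp add: coprime_dvd_mult_left_iff)
    then have "a mod int p ^ g = b mod int p ^ g" by (simp add: mod_eq_dvd_iff)
    then show "a = b" using a b by simp
  qed
  have "?h ` ?S \<subseteq> ?S" using pos by auto
  moreover have "card (?h ` ?S) = card ?S" using inj by (simp add: card_image)
  ultimately have "?h ` ?S = ?S" by (intro card_subset_eq) auto
  with inj show ?thesis by (rule bij_betw_imageI)
qed

lemma card_congruent_below:
  assumes "prime p" "m \<le> g"
  shows "card {b\<in>{0..<int p ^ g}. int p ^ m dvd (b - z)} = p ^ (g - m)"
proof -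
  let ?S = "{0..<int p ^ g}" and ?h = "\<lambda>b. (b * 1 + - z) mod int p ^ g"
  have "\<not> int p dvd 1" using assms(1) by (auto dest: prime_gt_1_nat)
  then have bij: "bij_betw ?h ?S ?S" by (rule bij_betw_affine_mod[OF assms(1)])
  have "int p ^ m dvd int p ^ g" using assms(2) by (rule le_imp_power_dvd)
  then have "int p ^ m dvd (b - z) \<longleftrightarrow> int p ^ m dvd ?h b" for b by (simp add: dvd_mod_iff)
  then have "card {b\<in>?S. int p ^ m dvd (b - z)} = card {b\<in>?S. int p ^ m dvd ?h b}" by simp
  also have "\<dots> = (\<Sum>b\<in>?S. of_bool (int p ^ m dvd ?h b))"
    by (rule card_filter_sum[where 'a=nat, unfolded of_nat_id]) simp
  also have "\<dots> = (\<Sum>y\<in>?S. of_bool (int p ^ m dvd y))" by (rule sum.reindex_bij_betw[OF bij])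
  also have "\<dots> = card {y\<in>?S. int p ^ m dvd y}"
    by (rule card_filter_sum[where 'a=nat, unfolded of_nat_id, symmetric]) simp
  also have "\<dots> = p ^ (g - m)" by (rule card_multiples_below[OF assms])
  finally show ?thesis .
qed

lemma card_capval_diff_eq:
  assumes "prime p" "w < g" "g \<le> C"
  shows "card {b\<in>{0..<int p ^ g}. capval p C (b - z) = w} = p ^ (g - w) - p ^ (g - Suc w)"
proof -
  let ?D = "\<lambda>k. {b\<in>{0..<int p ^ g}. int p ^ k dvd b - z}"
  have "capval p C (b - z) = w \<longleftrightarrow> int p ^ w dvd b - z \<and> \<not> int p ^ Suc w dvd b - z" for b
    using le_capval_iff[of w C p "b - z"] le_capval_iff[of "Suc w" C p "b - z"] assms(2,3) by auto
  then have "{b\<in>{0..<int p ^ g}. capval p C (b - z) = w} = ?D w - ?D (Suc w)" by auto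
  moreover have "?D (Suc w) \<subseteq> ?D w" by (auto intro: dvd_trans[OF le_imp_power_dvd[of w "Suc w"]])
  moreover have "finite (?D (Suc w))" by (rule finite_subset[of _ "{0..<int p ^ g}"]) auto
  ultimately show ?thesis
    using card_congruent_below[OF assms(1), of w g z] card_congruent_below[OF assms(1), of "Suc w" g z] assms(2)
    by (simp only: card_Diff_subset)
qed

lemma sum_capval_diff:
  fixes h :: "nat \<Rightarrow> 'a::comm_ring_1"
  assumes "prime p" "g \<le> C"
  shows "(\<Sum>b\<in>{0..<int p ^ g}. h (capval p C (b - z)))
       = (\<Sum>w<g. (of_nat (p ^ (g - w)) - of_nat (p ^ (g - Suc w))) * h w)
         + h (capval p C (z mod int p ^ g - z))"
proof -
  let ?S = "{0..<int p ^ g}"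
  define b0 where "b0 = z mod int p ^ g"
  have b0S: "b0 \<in> ?S" using assms by (simp add: b0_def prime_gt_0_nat)
  have capval_ge: "g \<le> capval p C (b - z) \<longleftrightarrow> b = b0" if "b \<in> ?S" for b
    using that le_capval_iff[OF assms(2), of p "b - z"] by (auto simp: b0_def mod_eq_dvd_iff[symmetric])
  have small: "capval p C (b - z) < g" if "b \<in> ?S - {b0}" for b
    using that capval_ge[of b] by auto
  have big: "g \<le> capval p C (b0 - z)" using capval_ge[OF b0S] by simp
  have "(\<Sum>b\<in>?S. h (capval p C (b - z))) = h (capval p C (b0 - z)) + (\<Sum>b\<in>?S - {b0}. h (capval p C (b - z)))"
    using b0S by (simp add: sum.remove)
  also have "(\<Sum>b\<in>?S - {b0}. h (capval p C (b - z)))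
      = (\<Sum>w<g. of_nat (card {b\<in>?S - {b0}. capval p C (b - z) = w}) * h w)"
  proof (rule sum_group_card)
    show "(\<lambda>b. capval p C (b - z)) ` (?S - {b0}) \<subseteq> {..<g}" using small by blast
  qed auto
  also have "\<dots> = (\<Sum>w<g. (of_nat (p ^ (g - w)) - of_nat (p ^ (g - Suc w))) * h w)"
  proof (intro sum.cong refl)
    fix w assume "w \<in> {..<g}"
    then have "{b\<in>?S - {b0}. capval p C (b - z) = w} = {b\<in>?S. capval p C (b - z) = w}"
      using big by auto
    moreover have "p ^ (g - Suc w) \<le> p ^ (g - w)"
      using prime_ge_1_nat[OF assms(1)] by (intro power_increasing) auto
    ultimately show "of_nat (card {b\<in>?S - {b0}. capval p C (b - z) = w}) * h w
        = (of_nat (p ^ (g - w)) - of_nat (p ^ (g - Suc w))) * h w"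
      using card_capval_diff_eq[OF assms(1) _ assms(2), of w z] \<open>w \<in> {..<g}\<close> by (simp add: of_nat_diff)
  qed
  finally show ?thesis by (simp add: b0_def add.commute)
qed

lemma sum_affine_unit:
  assumes "prime p" "\<not> int p dvd u"
    and per: "\<And>y y'. int p ^ (\<mu> + g) dvd (y - y') \<Longrightarrow> \<Phi> y = \<Phi> y'"
  shows "(\<Sum>y\<in>{0..<int p ^ g}. \<Phi> (int p ^ \<mu> * (y * u + R))) = (\<Sum>w\<in>{0..<int p ^ g}. \<Phi> (int p ^ \<mu> * w))"
proof -
  let ?h = "\<lambda>y. (y * u + R) mod int p ^ g"
  have "(\<Sum>y\<in>{0..<int p ^ g}. \<Phi> (int p ^ \<mu> * (y * u + R))) = (\<Sum>y\<in>{0..<int p ^ g}. \<Phi> (int p ^ \<mu> * ?h y))"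
  proof (intro sum.cong refl per)
    fix y
    have d: "(y * u + R) - ?h y = int p ^ g * ((y * u + R) div int p ^ g)"
      by (metis minus_mod_eq_mult_div)
    have "int p ^ \<mu> * (y * u + R) - int p ^ \<mu> * ?h y = int p ^ \<mu> * ((y * u + R) - ?h y)"
      by (simp add: right_diff_distrib)
    also have "\<dots> = int p ^ (\<mu> + g) * ((y * u + R) div int p ^ g)"
      unfolding d by (simp add: power_add mult.assoc)
    finally have "int p ^ \<mu> * (y * u + R) - int p ^ \<mu> * ?h y = int p ^ (\<mu> + g) * ((y * u + R) div int p ^ g)" .
    then show "int p ^ (\<mu> + g) dvd int p ^ \<mu> * (y * u + R) - int p ^ \<mu> * ?h y" by simp
  qed
  also have "\<dots> = (\<Sum>w\<in>{0..<int p ^ g}. \<Phi> (int p ^ \<mu> * w))"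
    by (rule sum.reindex_bij_betw[OF bij_betw_affine_mod[OF assms(1,2)], of "\<lambda>w. \<Phi> (int p ^ \<mu> * w)"])
  finally show ?thesis .
qed

text \<open>
  With the other variables of the row fixed, \<open>y \<mapsto> y x\<^sub>s\<^sub>0 + R\<close> runs through \<open>p\<^sup>\<mu>\<close> times all
  residues modulo \<open>p\<^sup>g\<close>, because \<open>x\<^sub>s\<^sub>0 / p\<^sup>\<mu>\<close> is a unit.
\<close>

lemma sum_assigns_linear_form:
  fixes \<Phi> :: "int \<Rightarrow> 'a::comm_semiring_1"
  assumes "prime p" "finite A" "s0 \<in> A" "bd r = int p ^ g"
    and xs0: "x s0 = int p ^ \<mu> * u" "\<not> int p dvd u"
    and xd: "\<And>s. s \<in> A \<Longrightarrow> int p ^ \<mu> dvd x s"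
    and per: "\<And>y y'. int p ^ (\<mu> + g) dvd (y - y') \<Longrightarrow> \<Phi> y = \<Phi> y'"
  shows "(\<Sum>f\<in>assigns ((\<lambda>s. (r, s)) ` A) bd. \<Phi> (\<Sum>s\<in>A. f r s * x s))
       = of_nat (card (assigns ((\<lambda>s. (r, s)) ` (A - {s0})) bd)) * (\<Sum>w\<in>{0..<int p ^ g}. \<Phi> (int p ^ \<mu> * w))"
proof -
  let ?J' = "(\<lambda>s. (r, s)) ` (A - {s0})"
  have J: "(\<lambda>s. (r, s)) ` A = {(r, s0)} \<union> ?J'" using assms(3) by auto
  have dj: "{(r, s0)} \<inter> ?J' = {}" by auto
  define R where "R f2 = (\<Sum>s\<in>A - {s0}. f2 r s * x s)" for f2
  have key: "(\<Sum>s\<in>A. (single_assign r s0 y r s + f2 r s) * x s) = y * x s0 + R f2" if f2: "f2 \<in> assigns ?J' bd" for y f2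
  proof -
    have "f2 r s0 = 0" using assigns_outside[OF f2, of r s0] by auto
    then have "(\<Sum>s\<in>A. (single_assign r s0 y r s + f2 r s) * x s) = y * x s0 + (\<Sum>s\<in>A - {s0}. (single_assign r s0 y r s + f2 r s) * x s)"
      using assms(2,3) by (simp add: sum.remove single_assign_def)
    also have "(\<Sum>s\<in>A - {s0}. (single_assign r s0 y r s + f2 r s) * x s) = R f2"
      unfolding R_def by (intro sum.cong refl) (auto simp: single_assign_def)
    finally show ?thesis .
  qed
  have Rd: "int p ^ \<mu> dvd R f2" for f2
    unfolding R_def by (intro dvd_sum) (use xd in auto)
  have "(\<Sum>f\<in>assigns ((\<lambda>s. (r, s)) ` A) bd. \<Phi> (\<Sum>s\<in>A. f r s * x s))
      = (\<Sum>f1\<in>assigns {(r, s0)} bd. \<Sum>f2\<in>assigns ?J' bd. \<Phi> (\<Sum>s\<in>A. (f1 + f2) r s * x s))"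
    unfolding J by (rule sum_assigns_Un[OF dj])
  also have "\<dots> = (\<Sum>y\<in>{0..<bd r}. \<Sum>f2\<in>assigns ?J' bd. \<Phi> (\<Sum>s\<in>A. (single_assign r s0 y + f2) r s * x s))"
    by (rule sum_assigns_singleton)
  also have "\<dots> = (\<Sum>f2\<in>assigns ?J' bd. \<Sum>y\<in>{0..<int p ^ g}. \<Phi> (y * x s0 + R f2))"
    unfolding assms(4) by (subst sum.swap) (intro sum.cong refl, simp add: key)
  also have "\<dots> = (\<Sum>f2\<in>assigns ?J' bd. \<Sum>w\<in>{0..<int p ^ g}. \<Phi> (int p ^ \<mu> * w))"
  proof (rule sum.cong[OF refl])
    fix f2
    obtain R' where R': "R f2 = int p ^ \<mu> * R'" using Rd by (metis dvdE)
    have "(\<Sum>y\<in>{0..<int p ^ g}. \<Phi> (y * x s0 + R f2)) = (\<Sum>y\<in>{0..<int p ^ g}. \<Phi> (int p ^ \<mu> * (y * u + R')))"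
      by (intro sum.cong refl) (simp add: xs0(1) R' algebra_simps)
    also have "\<dots> = (\<Sum>w\<in>{0..<int p ^ g}. \<Phi> (int p ^ \<mu> * w))"
      by (rule sum_affine_unit[OF assms(1) xs0(2) per])
    finally show "(\<Sum>y\<in>{0..<int p ^ g}. \<Phi> (y * x s0 + R f2)) = (\<Sum>w\<in>{0..<int p ^ g}. \<Phi> (int p ^ \<mu> * w))" .
  qed
  also have "\<dots> = of_nat (card (assigns ?J' bd)) * (\<Sum>w\<in>{0..<int p ^ g}. \<Phi> (int p ^ \<mu> * w))"
    by simp
  finally show ?thesis .
qed

definition var_bound :: "nat \<Rightarrow> (nat \<Rightarrow> nat) \<Rightarrow> nat \<Rightarrow> int" where
  "var_bound p e r = int p ^ (e r - 1)"

definition exp_sum :: "(nat \<Rightarrow> nat) \<Rightarrow> nat \<Rightarrow> nat" where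
  "exp_sum e r = (\<Sum>t\<in>{1..r}. e t)"

lemma exp_sum_step: "1 \<le> r \<Longrightarrow> exp_sum e r = exp_sum e (r - 1) + e r"
proof -
  assume "1 \<le> r"
  then have "{1..r} = insert r {1..r - 1}" by auto
  moreover have "r \<notin> {1..r - 1}" by auto
  ultimately show ?thesis unfolding exp_sum_def by (simp add: add.commute)
qed

lemma exp_sum_mono: "r \<le> r' \<Longrightarrow> exp_sum e r \<le> exp_sum e r'"
  unfolding exp_sum_def by (rule sum_mono2) auto

lemma e_le_exp_sum: "1 \<le> r \<Longrightarrow> e r \<le> exp_sum e r"
  using exp_sum_step[of r e] by simp

text \<open>
  Once \<open>y\<^sub>s\<close> is known for \<open>s > r\<close>, the number of ways to complete rows \<open>1..r\<close> depends on
  these values only through \<open>tail_val\<close> (\<open>solvable_count_poly\<close>).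
\<close>

definition tail_val :: "nat \<Rightarrow> nat \<Rightarrow> (nat \<Rightarrow> nat) \<Rightarrow> nat \<Rightarrow> (nat \<Rightarrow> int) \<Rightarrow> nat" where
  "tail_val p i e r x = Min (insert (exp_sum e r) ((\<lambda>s. capval p (exp_sum e r) (x s)) ` {r<..<i}))"

lemma le_tail_val_iff: "m \<le> tail_val p i e r x \<longleftrightarrow> m \<le> exp_sum e r \<and> (\<forall>s\<in>{r<..<i}. int p ^ m dvd x s)"
proof -
  have "m \<le> tail_val p i e r x \<longleftrightarrow> m \<le> exp_sum e r \<and> (\<forall>s\<in>{r<..<i}. m \<le> capval p (exp_sum e r) (x s))"
    unfolding tail_val_def by (subst Min_ge_iff) auto
  also have "\<dots> \<longleftrightarrow> m \<le> exp_sum e r \<and> (\<forall>s\<in>{r<..<i}. int p ^ m dvd x s)"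
    using le_capval_iff by blast
  finally show ?thesis .
qed

lemma tail_val_last_row:
  assumes "1 \<le> i"
  shows "tail_val p i e (i - 1) x = exp_sum e (i - 1)"
proof -
  have "{i - 1<..<i} = {}" using assms by auto
  then show ?thesis unfolding tail_val_def by simp
qed

lemma tail_val_le: "tail_val p i e r x \<le> exp_sum e r"
  using le_tail_val_iff[of "tail_val p i e r x" p i e r x] by simp

lemma nat_eq_by_le: "(\<And>m::nat. m \<le> a \<longleftrightarrow> m \<le> b) \<Longrightarrow> a = b"
  by (metis le_antisym order_refl)

lemma tail_val_update:
  assumes "prime p" "1 \<le> r" "r < i" "int p ^ e r dvd T"
  shows "tail_val p i e (r - 1) (x(r := T div int p ^ e r))
       = min (exp_sum e (r - 1)) (min (tail_val p i e r x) (capval p (exp_sum e r) T - e r))"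
proof (rule nat_eq_by_le)
  fix m
  let ?M' = "exp_sum e (r - 1)" and ?L = "exp_sum e r" and ?E = "e r"
  have L: "?L = ?M' + ?E" using exp_sum_step[OF assms(2)] by simp
  obtain q where T: "T = int p ^ ?E * q" using assms(4) by (metis dvdE)
  have pos: "int p ^ ?E \<noteq> 0" using assms(1) by (simp add: prime_gt_0_nat)
  have Eval: "?E \<le> capval p ?L T" using le_capval_iff[of ?E ?L p T] assms(4) L by simp
  have set: "{r - 1<..<i} = insert r {r<..<i}" using assms(2,3) by auto
  have "m \<le> tail_val p i e (r - 1) (x(r := T div int p ^ e r))
      \<longleftrightarrow> m \<le> ?M' \<and> int p ^ m dvd q \<and> (\<forall>s\<in>{r<..<i}. int p ^ m dvd x s)"
    unfolding le_tail_val_iff set using T pos by auto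
  also have "\<dots> \<longleftrightarrow> m \<le> ?M' \<and> (m \<le> ?L \<and> (\<forall>s\<in>{r<..<i}. int p ^ m dvd x s)) \<and> m + ?E \<le> capval p ?L T"
  proof -
    have "m \<le> ?M' \<Longrightarrow> (m + ?E \<le> capval p ?L T \<longleftrightarrow> int p ^ (m + ?E) dvd T)"
      using le_capval_iff[of "m + ?E" ?L p T] L by simp
    moreover have "int p ^ (m + ?E) dvd T \<longleftrightarrow> int p ^ m dvd q"
      unfolding T using pos assms(1) by (simp add: power_add mult.commute prime_gt_0_nat)
    ultimately show ?thesis using L by auto
  qed
  also have "\<dots> \<longleftrightarrow> m \<le> min ?M' (min (tail_val p i e r x) (capval p ?L T - ?E))"
    using Eval le_tail_val_iff[of m p i e r x] by auto
  finally show "m \<le> tail_val p i e (r - 1) (x(r := T div int p ^ e r)) \<longleftrightarrow> m \<le> min ?M' (min (tail_val p i e r x) (capval p ?L T - ?E))" .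
qed

text \<open>
  Here \<open>l\<close> is the capped valuation of the right-hand side of row \<open>r\<close>: the row can be solved iff
  \<open>E \<le> l\<close>, and then \<open>y\<^sub>r\<close> has valuation \<open>l - E\<close> (\<open>row_condition_iff\<close>).
\<close>

definition row_outcome :: "nat \<Rightarrow> nat \<Rightarrow> nat \<Rightarrow> nat \<Rightarrow> nat \<Rightarrow> bool" where
  "row_outcome E M' \<mu> s' l \<longleftrightarrow> E \<le> l \<and> min M' (min \<mu> (l - E)) = s'"

text \<open>Exactly \<open>p\<^bsup>g-w\<^esup> - p\<^bsup>g-w-1\<^esup>\<close> residues modulo \<open>p\<^sup>g\<close> have valuation \<open>w < g\<close> (\<open>card_capval_diff_eq\<close>).\<close>

definition val_sum :: "nat \<Rightarrow> nat \<Rightarrow> (nat \<Rightarrow> rat) \<Rightarrow> rat" where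
  "val_sum p g h = (\<Sum>w<g. (of_nat (p ^ (g - w)) - of_nat (p ^ (g - Suc w))) * h w)"

definition val_sum2 :: "nat \<Rightarrow> nat \<Rightarrow> nat \<Rightarrow> nat \<Rightarrow> (nat \<Rightarrow> nat \<Rightarrow> rat) \<Rightarrow> rat" where
  "val_sum2 p g C \<nu> h = val_sum p g (\<lambda>u. val_sum p g (\<lambda>w. h u w) + h u \<nu>) + (val_sum p g (\<lambda>w. h C w) + h C \<nu>)"

definition outcome_shift_sum :: "nat \<Rightarrow> nat \<Rightarrow> nat \<Rightarrow> nat \<Rightarrow> (nat \<Rightarrow> bool) \<Rightarrow> nat \<Rightarrow> rat" where
  "outcome_shift_sum p g L \<mu> Ob l =
     (if l \<le> \<mu> then of_nat p ^ g * of_bool (Ob l)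
      else val_sum p g (\<lambda>u. of_bool (Ob (min L (\<mu> + 1 + u)))) + of_bool (Ob (min L (\<mu> + 1 + g))))"

lemma row_outcome_cap: "row_outcome E M' \<mu> s' l = row_outcome E M' \<mu> s' (min l (\<mu> + E))"
  unfolding row_outcome_def by (cases "l \<le> \<mu> + E") (auto simp: min_def)

lemma row_outcome_capval_cong:
  assumes "int p ^ (\<mu> + E) dvd z - z'"
  shows "row_outcome E M' \<mu> s' (capval p L z) = row_outcome E M' \<mu> s' (capval p L z')"
proof -
  let ?K = "min L (\<mu> + E)"
  have a: "min (capval p L w) (\<mu> + E) = capval p ?K w" for w
    using capval_smaller_cap[of ?K L p w] capval_le[of p L w] by (simp add: min_def)
  have "int p ^ ?K dvd int p ^ (\<mu> + E)" by (rule le_imp_power_dvd) simp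
  then have "capval p ?K z = capval p ?K z'" using assms by (intro capval_eq_if_dvd_diff) (rule dvd_trans)
  then show ?thesis using row_outcome_cap[of E M' \<mu> s' "capval p L z"] row_outcome_cap[of E M' \<mu> s' "capval p L z'"] a by simp
qed

lemma sum_capval:
  fixes h :: "nat \<Rightarrow> rat"
  assumes "prime p" "g \<le> C"
  shows "(\<Sum>c\<in>{0..<int p ^ g}. h (capval p C c)) = val_sum p g h + h C"
  using sum_capval_diff[OF assms, of h 0] by (simp add: val_sum_def capval_0)

lemma sum_capval_pair:
  fixes h :: "nat \<Rightarrow> nat \<Rightarrow> rat"
  assumes "prime p" "g \<le> C"
  shows "(\<Sum>c\<in>{0..<int p ^ g}. \<Sum>b\<in>{0..<int p ^ g}. h (capval p C c) (capval p C (b - \<beta>)))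
       = val_sum2 p g C (capval p C (\<beta> mod int p ^ g - \<beta>)) h"
proof -
  have "(\<Sum>c\<in>{0..<int p ^ g}. \<Sum>b\<in>{0..<int p ^ g}. h (capval p C c) (capval p C (b - \<beta>)))
      = (\<Sum>c\<in>{0..<int p ^ g}. val_sum p g (\<lambda>w. h (capval p C c) w) + h (capval p C c) (capval p C (\<beta> mod int p ^ g - \<beta>)))"
    by (intro sum.cong refl) (simp add: sum_capval_diff[OF assms] val_sum_def)
  also have "\<dots> = val_sum2 p g C (capval p C (\<beta> mod int p ^ g - \<beta>)) h"
    unfolding val_sum2_def by (rule sum_capval[OF assms])
  finally show ?thesis .
qed

lemma sum_capval_pair_scaled:
  fixes h :: "nat \<Rightarrow> nat \<Rightarrow> rat"
  assumes "prime p" "g \<le> C"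
  shows "(\<Sum>c\<in>{0..<int p ^ g}. \<Sum>b\<in>{0..<int p ^ g}. K * h (capval p C c) (capval p C (b - \<beta>)))
       = K * val_sum2 p g C (capval p C (\<beta> mod int p ^ g - \<beta>)) h"
  by (simp only: sum_distrib_left[symmetric] sum_capval_pair[OF assms])

lemma capval_mod_diff_self: "capval p g (z mod int p ^ g - z) = g"
proof (rule capval_eqI)
  have "int p ^ g dvd z mod int p ^ g - z" using mod_eq_dvd_iff[of "z mod int p ^ g" "int p ^ g" z] by simp
  then show "int p ^ m dvd z mod int p ^ g - z \<longleftrightarrow> m \<le> g" if "m \<le> g" for m
    using that le_imp_power_dvd dvd_trans by blast
qed simp

lemma row_outcome_capval_shift:
  assumes "prime p" "L = M' + E" "1 \<le> E" "g = E - 1"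
  shows "row_outcome E M' \<mu> s' (capval p L (int p ^ (\<mu> + 1) * (y' - w)))
       = row_outcome E M' \<mu> s' (min L (\<mu> + 1 + capval p g (w - y')))"
proof -
  have "capval p L 1 = 0" by (rule capval_eqI) (use assms(1) in \<open>auto simp: prime_gt_1_nat\<close>)
  then have a: "capval p L (int p ^ (\<mu> + 1) * (y' - w)) = min L (\<mu> + 1 + capval p L (y' - w))"
    using capval_pow_mult[OF assms(1) order_refl[of L], where a="\<mu> + 1" and c="y' - w" and d=1] by simp
  have b: "capval p g (w - y') = min g (capval p L (y' - w))"
    using capval_smaller_cap[of g L p "y' - w"] capval_uminus[of p g "y' - w"] assms(2,4) by simp
  have "min (min L (\<mu> + 1 + capval p L (y' - w))) (\<mu> + E) = min (min L (\<mu> + 1 + capval p g (w - y'))) (\<mu> + E)"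
    unfolding b using assms(3,4) by (simp add: min_def split: if_split) arith
  then show ?thesis unfolding a by (metis row_outcome_cap)
qed

lemma sum_row_outcome_shift:
  assumes "prime p" "\<mu> < L" "L = M' + E" "1 \<le> E" "g = E - 1"
  shows "(\<Sum>w\<in>{0..<int p ^ g}. of_bool (row_outcome E M' \<mu> s' (capval p L (y - int p ^ (\<mu> + 1) * w))) :: rat)
       = outcome_shift_sum p g L \<mu> (row_outcome E M' \<mu> s') (capval p (\<mu> + 1) y)"
proof (cases "capval p (\<mu> + 1) y \<le> \<mu>")
  case True
  have "capval p L (y - int p ^ (\<mu> + 1) * w) = capval p (\<mu> + 1) y" for w
  proof -
    have "capval p (\<mu> + 1) (y - int p ^ (\<mu> + 1) * w) = capval p (\<mu> + 1) y" by (rule capval_eq_if_dvd_diff) simp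
    moreover have "capval p (\<mu> + 1) (y - int p ^ (\<mu> + 1) * w) = min (\<mu> + 1) (capval p L (y - int p ^ (\<mu> + 1) * w))"
      using assms(2) by (intro capval_smaller_cap) simp
    ultimately show ?thesis using True by (simp add: min_def split: if_splits)
  qed
  moreover have "card {0..<int p ^ g} = p ^ g" by (simp add: nat_power_eq)
  ultimately show ?thesis using True by (simp add: outcome_shift_sum_def)
next
  case False
  then have "int p ^ (\<mu> + 1) dvd y" using le_capval_iff[of "\<mu> + 1" "\<mu> + 1" p y] by simp
  then obtain y' where y: "y = int p ^ (\<mu> + 1) * y'" by (metis dvdE)
  let ?h = "\<lambda>u. of_bool (row_outcome E M' \<mu> s' (min L (\<mu> + 1 + u))) :: rat"
  have "(\<Sum>w\<in>{0..<int p ^ g}. of_bool (row_outcome E M' \<mu> s' (capval p L (y - int p ^ (\<mu> + 1) * w))) :: rat)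
      = (\<Sum>w\<in>{0..<int p ^ g}. ?h (capval p g (w - y')))"
    using row_outcome_capval_shift[OF assms(1,3-5)] by (simp add: y right_diff_distrib)
  also have "\<dots> = val_sum p g ?h + ?h (capval p g (y' mod int p ^ g - y'))"
    unfolding val_sum_def by (rule sum_capval_diff[OF assms(1) order_refl])
  finally show ?thesis using False unfolding outcome_shift_sum_def capval_mod_diff_self by simp
qed

definition row_vars :: "nat \<Rightarrow> nat \<Rightarrow> nat \<Rightarrow> (nat \<times> nat) set" where
  "row_vars i j r = (\<lambda>s. (r, s)) ` {r<..<i} \<union> ({(r, i)} \<union> {(r, j)})"

definition row_rhs :: "nat \<Rightarrow> nat \<Rightarrow> nat \<Rightarrow> (nat \<Rightarrow> nat \<Rightarrow> int) \<Rightarrow> (nat \<Rightarrow> int) \<Rightarrow> int \<Rightarrow> nat \<Rightarrow> int" where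
  "row_rhs p i j a x \<beta> r = int p ^ 2 * a r i * (a r j - \<beta>) - (\<Sum>s\<in>{r<..<i}. int p * a r s * x s)"

text \<open>The number of choices for the variables of row \<open>r\<close> that lead to tail value \<open>s'\<close> (\<open>card_row_step\<close>).\<close>

definition row_weight :: "nat \<Rightarrow> nat \<Rightarrow> (nat \<Rightarrow> nat) \<Rightarrow> nat \<Rightarrow> nat \<Rightarrow> nat \<Rightarrow> nat \<Rightarrow> rat" where
  "row_weight p i e r \<mu> \<nu> s' =
    (let g = e r - 1; L = exp_sum e r; C = exp_sum e i + 1; m = i - Suc r;
         Ob = row_outcome (e r) (exp_sum e (r - 1)) \<mu> s'
     in if \<mu> = L
        then of_nat p ^ (g * m) * val_sum2 p g C \<nu> (\<lambda>u w. of_bool (Ob (min L (2 + u + w))))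
        else of_nat p ^ (g * (m - 1)) *
          val_sum2 p g C \<nu> (\<lambda>u w. outcome_shift_sum p g L \<mu> Ob (min (\<mu> + 1) (2 + u + w))))"

lemma row_rhs_decompose:
  assumes "\<alpha> \<in> assigns ((\<lambda>s. (r, s)) ` {r<..<i}) bd" "i < j"
  shows "row_rhs p i j (\<alpha> + (single_assign r i c + single_assign r j b)) x \<beta> r
       = int p ^ 2 * c * (b - \<beta>) - int p * (\<Sum>s\<in>{r<..<i}. \<alpha> r s * x s)"
proof -
  have "(r, i) \<notin> (\<lambda>s. (r, s)) ` {r<..<i}" by auto
  then have ai: "\<alpha> r i = 0" by (rule assigns_outside[OF assms(1)])
  have "(r, j) \<notin> (\<lambda>s. (r, s)) ` {r<..<i}" using assms(2) by auto
  then have aj: "\<alpha> r j = 0" by (rule assigns_outside[OF assms(1)])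
  have "(\<Sum>s\<in>{r<..<i}. int p * (\<alpha> + (single_assign r i c + single_assign r j b)) r s * x s) = (\<Sum>s\<in>{r<..<i}. int p * (\<alpha> r s * x s))"
    using assms(2) by (intro sum.cong refl) (auto simp: single_assign_def)
  also have "\<dots> = int p * (\<Sum>s\<in>{r<..<i}. \<alpha> r s * x s)" by (simp add: sum_distrib_left)
  finally show ?thesis using ai aj assms(2) unfolding row_rhs_def by (simp add: single_assign_def)
qed

lemma sum_assigns_row_vars:
  assumes "r < i" "i < j"
  shows "(\<Sum>f\<in>assigns (row_vars i j r) bd. \<Psi> f)
       = (\<Sum>c\<in>{0..<bd r}. \<Sum>b\<in>{0..<bd r}. \<Sum>\<alpha>\<in>assigns ((\<lambda>s. (r, s)) ` {r<..<i}) bd. \<Psi> (\<alpha> + (single_assign r i c + single_assign r j b)))"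
proof -
  let ?JA = "(\<lambda>s. (r, s)) ` {r<..<i}"
  have d1: "?JA \<inter> ({(r, i)} \<union> {(r, j)}) = {}" using assms by auto
  have d2: "{(r, i)} \<inter> {(r, j)} = {}" using assms by auto
  have "(\<Sum>f\<in>assigns (row_vars i j r) bd. \<Psi> f) = (\<Sum>\<alpha>\<in>assigns ?JA bd. \<Sum>f'\<in>assigns ({(r, i)} \<union> {(r, j)}) bd. \<Psi> (\<alpha> + f'))"
    unfolding row_vars_def by (rule sum_assigns_Un[OF d1])
  also have "\<dots> = (\<Sum>\<alpha>\<in>assigns ?JA bd. \<Sum>f1\<in>assigns {(r, i)} bd. \<Sum>f2\<in>assigns {(r, j)} bd. \<Psi> (\<alpha> + (f1 + f2)))"
    by (intro sum.cong refl sum_assigns_Un[OF d2])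
  also have "\<dots> = (\<Sum>\<alpha>\<in>assigns ?JA bd. \<Sum>c\<in>{0..<bd r}. \<Sum>b\<in>{0..<bd r}. \<Psi> (\<alpha> + (single_assign r i c + single_assign r j b)))"
    by (intro sum.cong refl) (simp add: sum_assigns_singleton)
  also have "\<dots> = (\<Sum>c\<in>{0..<bd r}. \<Sum>\<alpha>\<in>assigns ?JA bd. \<Sum>b\<in>{0..<bd r}. \<Psi> (\<alpha> + (single_assign r i c + single_assign r j b)))"
    by (rule sum.swap)
  also have "\<dots> = (\<Sum>c\<in>{0..<bd r}. \<Sum>b\<in>{0..<bd r}. \<Sum>\<alpha>\<in>assigns ?JA bd. \<Psi> (\<alpha> + (single_assign r i c + single_assign r j b)))"
    by (intro sum.cong refl sum.swap)
  finally show ?thesis .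
qed

lemma card_assigns_row_var_bound:
  assumes "finite B"
  shows "card (assigns (Pair r ` B) (var_bound p e)) = p ^ ((e r - 1) * card B)"
proof -
  have "int (card (assigns (Pair r ` B) (var_bound p e))) = var_bound p e r ^ card (Pair r ` B)"
    using assms by (intro card_assigns_row) (auto simp: var_bound_def)
  also have "\<dots> = int (p ^ ((e r - 1) * card B))"
    by (simp add: var_bound_def card_image inj_on_def power_mult)
  finally show ?thesis by (simp only: of_nat_eq_iff)
qed

lemma row_condition_iff:
  assumes "prime p" "1 \<le> r" "r < i"
  shows "int p ^ e r dvd T \<and> tail_val p i e (r - 1) (x(r := T div int p ^ e r)) = s' \<longleftrightarrow>
         row_outcome (e r) (exp_sum e (r - 1)) (tail_val p i e r x) s' (capval p (exp_sum e r) T)"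
proof -
  have "int p ^ e r dvd T \<longleftrightarrow> e r \<le> capval p (exp_sum e r) T"
    using le_capval_iff[OF e_le_exp_sum[OF assms(2)]] by blast
  then show ?thesis using tail_val_update[OF assms, of e T x] unfolding row_outcome_def by auto
qed

lemma sum_row_free_vars_full:
  fixes \<Phi> :: "nat \<Rightarrow> 'a::comm_semiring_1"
  assumes "\<forall>s\<in>A. int p ^ L dvd x s"
  shows "(\<Sum>\<alpha>\<in>assigns (Pair r ` A) bd. \<Phi> (capval p L (y - int p * (\<Sum>s\<in>A. \<alpha> r s * x s))))
       = of_nat (card (assigns (Pair r ` A) bd)) * \<Phi> (capval p L y)"
proof -
  have "capval p L (y - int p * (\<Sum>s\<in>A. \<alpha> r s * x s)) = capval p L y" for \<alpha>
  proof (rule capval_eq_if_dvd_diff)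
    have "int p ^ L dvd (\<Sum>s\<in>A. \<alpha> r s * x s)" using assms by (intro dvd_sum dvd_mult) simp
    then show "int p ^ L dvd y - int p * (\<Sum>s\<in>A. \<alpha> r s * x s) - y" by simp
  qed
  then show ?thesis by simp
qed

lemma sum_row_free_vars_partial:
  assumes "prime p" "finite A" "s0 \<in> A" "bd r = int p ^ g"
    and "\<forall>s\<in>A. int p ^ \<mu> dvd x s" "\<not> int p ^ (\<mu> + 1) dvd x s0"
    and "\<mu> < L" "L = M' + E" "1 \<le> E" "g = E - 1"
  shows "(\<Sum>\<alpha>\<in>assigns (Pair r ` A) bd.
            of_bool (row_outcome E M' \<mu> s' (capval p L (y - int p * (\<Sum>s\<in>A. \<alpha> r s * x s)))) :: rat)
       = of_nat (card (assigns (Pair r ` (A - {s0})) bd)) *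
           outcome_shift_sum p g L \<mu> (row_outcome E M' \<mu> s') (capval p (\<mu> + 1) y)"
proof -
  let ?Ob = "row_outcome E M' \<mu> s'"
  obtain u where u: "x s0 = int p ^ \<mu> * u" using assms(3,5) by (metis dvdE)
  have u_coprime: "\<not> int p dvd u" using assms(6) u by (auto simp: mult_dvd_mono)
  have xd: "\<And>s. s \<in> A \<Longrightarrow> int p ^ \<mu> dvd x s" using assms(5) by blast
  have periodic: "(of_bool (?Ob (capval p L (y - int p * t))) :: rat) = of_bool (?Ob (capval p L (y - int p * t')))"
    if "int p ^ (\<mu> + g) dvd t - t'" for t t'
  proof -
    have "int p ^ (\<mu> + g) dvd t' - t" using that by (metis dvd_minus_iff minus_diff_eq)
    then have "int p * int p ^ (\<mu> + g) dvd int p * (t' - t)" by (rule mult_dvd_mono[OF dvd_refl])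
    moreover have "\<mu> + E = Suc (\<mu> + g)" using assms(9,10) by simp
    ultimately have "int p ^ (\<mu> + E) dvd (y - int p * t) - (y - int p * t')" by (simp add: algebra_simps)
    then show ?thesis by (simp only: row_outcome_capval_cong)
  qed
  have "(\<Sum>\<alpha>\<in>assigns (Pair r ` A) bd. (\<lambda>t. of_bool (?Ob (capval p L (y - int p * t))) :: rat) (\<Sum>s\<in>A. \<alpha> r s * x s))
      = of_nat (card (assigns (Pair r ` (A - {s0})) bd)) *
          (\<Sum>w\<in>{0..<int p ^ g}. of_bool (?Ob (capval p L (y - int p * (int p ^ \<mu> * w)))))"
    by (rule sum_assigns_linear_form[where bd=bd and r=r and x=x and \<mu>=\<mu> and g=g and \<Phi>="\<lambda>t. of_bool (?Ob (capval p L (y - int p * t)))",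
          OF assms(1-4) u u_coprime xd periodic])
  also have "(\<Sum>w\<in>{0..<int p ^ g}. of_bool (?Ob (capval p L (y - int p * (int p ^ \<mu> * w)))) :: rat)
      = (\<Sum>w\<in>{0..<int p ^ g}. of_bool (?Ob (capval p L (y - int p ^ (\<mu> + 1) * w))))"
    by (simp add: mult.assoc)
  also have "\<dots> = outcome_shift_sum p g L \<mu> ?Ob (capval p (\<mu> + 1) y)"
    by (rule sum_row_outcome_shift[OF assms(1,7-10)])
  finally show ?thesis by simp
qed

lemma card_row_step_as_sum:
  assumes p: "prime p" and r: "1 \<le> r" "r < i" and ij: "i < j"
  shows "(of_nat (card {f \<in> assigns (row_vars i j r) (var_bound p e). int p ^ e r dvd row_rhs p i j f x \<beta> r \<and>
             tail_val p i e (r - 1) (x(r := row_rhs p i j f x \<beta> r div int p ^ e r)) = s'}) :: rat)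
       = (\<Sum>c\<in>{0..<int p ^ (e r - 1)}. \<Sum>b\<in>{0..<int p ^ (e r - 1)}. \<Sum>\<alpha>\<in>assigns (Pair r ` {r<..<i}) (var_bound p e).
            of_bool (row_outcome (e r) (exp_sum e (r - 1)) (tail_val p i e r x) s'
              (capval p (exp_sum e r) (int p ^ 2 * c * (b - \<beta>) - int p * (\<Sum>s\<in>{r<..<i}. \<alpha> r s * x s)))))"
proof -
  let ?Ob = "row_outcome (e r) (exp_sum e (r - 1)) (tail_val p i e r x) s'"
  have finite: "finite (assigns (row_vars i j r) (var_bound p e))"
    unfolding row_vars_def by (intro finite_assigns) simp
  have "(of_nat (card {f \<in> assigns (row_vars i j r) (var_bound p e). int p ^ e r dvd row_rhs p i j f x \<beta> r \<and>
             tail_val p i e (r - 1) (x(r := row_rhs p i j f x \<beta> r div int p ^ e r)) = s'}) :: rat)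
      = (\<Sum>f\<in>assigns (row_vars i j r) (var_bound p e). of_bool (?Ob (capval p (exp_sum e r) (row_rhs p i j f x \<beta> r))))"
    unfolding row_condition_iff[OF p r] by (rule card_filter_sum[OF finite])
  also have "\<dots> = (\<Sum>c\<in>{0..<var_bound p e r}. \<Sum>b\<in>{0..<var_bound p e r}. \<Sum>\<alpha>\<in>assigns (Pair r ` {r<..<i}) (var_bound p e).
            of_bool (?Ob (capval p (exp_sum e r) (int p ^ 2 * c * (b - \<beta>) - int p * (\<Sum>s\<in>{r<..<i}. \<alpha> r s * x s)))))"
    unfolding sum_assigns_row_vars[OF r(2) ij] by (intro sum.cong refl) (simp add: row_rhs_decompose[OF _ ij])
  finally show ?thesis by (simp only: var_bound_def)
qed

lemma card_row_step:
  assumes p: "prime p" and r: "1 \<le> r" "r < i" and ij: "i < j" and er: "0 < e r"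
  shows "(of_nat (card {f \<in> assigns (row_vars i j r) (var_bound p e). int p ^ e r dvd row_rhs p i j f x \<beta> r \<and>
             tail_val p i e (r - 1) (x(r := row_rhs p i j f x \<beta> r div int p ^ e r)) = s'}) :: rat)
         = row_weight p i e r (tail_val p i e r x) (capval p (exp_sum e i + 1) (\<beta> mod int p ^ (e r - 1) - \<beta>)) s'"
proof -
  let ?g = "e r - 1" and ?L = "exp_sum e r" and ?C = "exp_sum e i + 1" and ?\<mu> = "tail_val p i e r x"
    and ?A = "{r<..<i}" and ?m = "i - Suc r" and ?bd = "var_bound p e"
    and ?Ob = "row_outcome (e r) (exp_sum e (r - 1)) (tail_val p i e r x) s'"
  have LE: "?L = exp_sum e (r - 1) + e r" using exp_sum_step[OF r(1)] by simp
  have LC: "?L \<le> ?C" using exp_sum_mono[of r i e] r by simp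
  have gC: "?g \<le> ?C" using LE LC by simp
  show ?thesis
  proof (cases "?\<mu> = ?L")
    case True
    have "\<forall>s\<in>?A. int p ^ ?L dvd x s" using le_tail_val_iff[of ?L p i e r x] True by simp
    then have free: "(\<Sum>\<alpha>\<in>assigns (Pair r ` ?A) ?bd.
          of_bool (?Ob (capval p ?L (int p ^ 2 * c * (b - \<beta>) - int p * (\<Sum>s\<in>?A. \<alpha> r s * x s)))) :: rat)
        = of_nat (card (assigns (Pair r ` ?A) ?bd)) * of_bool (?Ob (capval p ?L (int p ^ 2 * c * (b - \<beta>))))" for c b
      by (rule sum_row_free_vars_full)
    have count: "of_nat (card (assigns (Pair r ` ?A) ?bd)) * of_bool (?Ob (capval p ?L (int p ^ 2 * c * (b - \<beta>))))
        = (of_nat p ^ (?g * ?m) :: rat) * of_bool (?Ob (min ?L (2 + capval p ?C c + capval p ?C (b - \<beta>))))" for c b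
      by (simp add: card_assigns_row_var_bound capval_pow_mult[OF p LC])
    show ?thesis
      unfolding card_row_step_as_sum[OF p r ij] free count sum_capval_pair_scaled[OF p gC, where h="\<lambda>u w. of_bool (?Ob (min ?L (2 + u + w)))"]
      using True by (simp add: row_weight_def Let_def)
  next
    case False
    then have \<mu>L: "?\<mu> < ?L" using tail_val_le[of p i e r x] by simp
    have xd: "\<forall>s\<in>?A. int p ^ ?\<mu> dvd x s" using le_tail_val_iff[of ?\<mu> p i e r x] by simp
    obtain s0 where s0: "s0 \<in> ?A" "\<not> int p ^ (?\<mu> + 1) dvd x s0"
      using le_tail_val_iff[of "?\<mu> + 1" p i e r x] \<mu>L by auto
    have free: "(\<Sum>\<alpha>\<in>assigns (Pair r ` ?A) ?bd.
          of_bool (?Ob (capval p ?L (int p ^ 2 * c * (b - \<beta>) - int p * (\<Sum>s\<in>?A. \<alpha> r s * x s)))) :: rat)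
        = of_nat (card (assigns (Pair r ` (?A - {s0})) ?bd)) * outcome_shift_sum p ?g ?L ?\<mu> ?Ob
            (capval p (?\<mu> + 1) (int p ^ 2 * c * (b - \<beta>)))" for c b
      using er by (intro sum_row_free_vars_partial[OF p _ s0(1) _ xd s0(2) \<mu>L LE]) (simp_all add: var_bound_def)
    have count: "of_nat (card (assigns (Pair r ` (?A - {s0})) ?bd)) * outcome_shift_sum p ?g ?L ?\<mu> ?Ob
            (capval p (?\<mu> + 1) (int p ^ 2 * c * (b - \<beta>)))
        = of_nat p ^ (?g * (?m - 1)) *
        outcome_shift_sum p ?g ?L ?\<mu> ?Ob (min (?\<mu> + 1) (2 + capval p ?C c + capval p ?C (b - \<beta>)))" for c b
    proof -
      have "card (?A - {s0}) = ?m - 1" using s0(1) by simp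
      moreover have "capval p (?\<mu> + 1) (int p ^ 2 * c * (b - \<beta>)) = min (?\<mu> + 1) (2 + capval p ?C c + capval p ?C (b - \<beta>))"
        using \<mu>L LC by (intro capval_pow_mult[OF p]) simp
      ultimately show ?thesis by (simp add: card_assigns_row_var_bound)
    qed
    show ?thesis
      unfolding card_row_step_as_sum[OF p r ij] free count sum_capval_pair_scaled[OF p gC, where h="\<lambda>u w. outcome_shift_sum p ?g ?L ?\<mu> ?Ob (min (?\<mu> + 1) (2 + u + w))"]
      using False by (simp add: row_weight_def Let_def)
  qed
qed

lemma poly_on_primes_of_nat_power: "poly_on_primes (\<lambda>p. of_nat (p ^ k))"
  using poly_on_primes_power[OF poly_on_primes_id, of k] by simp

lemma poly_on_primes_val_sum: "(\<And>w. poly_on_primes (\<lambda>p. h p w)) \<Longrightarrow> poly_on_primes (\<lambda>p. val_sum p g (h p))"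
  unfolding val_sum_def
  by (intro poly_on_primes_sum poly_on_primes_mult poly_on_primes_diff poly_on_primes_of_nat_power) auto

lemma poly_on_primes_val_sum2: "(\<And>u w. poly_on_primes (\<lambda>p. h p u w)) \<Longrightarrow> poly_on_primes (\<lambda>p. val_sum2 p g C \<nu> (h p))"
  unfolding val_sum2_def
  by (intro poly_on_primes_add poly_on_primes_val_sum) auto

lemma poly_on_primes_outcome_shift_sum: "poly_on_primes (\<lambda>p. outcome_shift_sum p g L \<mu> Ob l)"
  unfolding outcome_shift_sum_def
  by (intro poly_on_primes_if poly_on_primes_add poly_on_primes_mult poly_on_primes_power
      poly_on_primes_val_sum poly_on_primes_id poly_on_primes_const)

lemma poly_on_primes_row_weight: "poly_on_primes (\<lambda>p. row_weight p i e r \<mu> \<nu> s')"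
  unfolding row_weight_def Let_def
  by (intro poly_on_primes_if poly_on_primes_mult poly_on_primes_power poly_on_primes_id
      poly_on_primes_val_sum2 poly_on_primes_const poly_on_primes_outcome_shift_sum)

definition prefix_vars :: "nat \<Rightarrow> nat \<Rightarrow> nat \<Rightarrow> (nat \<times> nat) set" where
  "prefix_vars i j r = {(t, s). 1 \<le> t \<and> t \<le> r \<and> (t < s \<and> s \<le> i \<or> s = j)}"

text \<open>
  Back-substitution in rows \<open>1..r\<close> of the triangular system, with the unknowns \<open>y\<^sub>s\<close>, \<open>s > r\<close>,
  already fixed to \<open>x s\<close>, and with \<open>\<beta>\<close> standing for \<open>a\<^sub>i\<^sub>j\<close> (so that \<open>y\<^sub>i = p \<beta>\<close>).
\<close>

definition solvable :: "nat \<Rightarrow> nat \<Rightarrow> nat \<Rightarrow> (nat \<Rightarrow> nat) \<Rightarrow> nat \<Rightarrow> (nat \<Rightarrow> nat \<Rightarrow> int) \<Rightarrow> (nat \<Rightarrow> int) \<Rightarrow> int \<Rightarrow> bool" where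
  "solvable p i j e r a x \<beta> \<longleftrightarrow> (\<exists>y. (\<forall>s. r < s \<longrightarrow> y s = x s) \<and>
     (\<forall>t\<in>{1..r}. int p ^ e t * y t + (\<Sum>s\<in>{t<..<i}. int p * a t s * y s) = int p ^ 2 * a t i * (a t j - \<beta>)))"

definition solvable_count :: "nat \<Rightarrow> nat \<Rightarrow> nat \<Rightarrow> (nat \<Rightarrow> nat) \<Rightarrow> nat \<Rightarrow> (nat \<Rightarrow> int) \<Rightarrow> int \<Rightarrow> nat" where
  "solvable_count p i j e r x \<beta> = card {a \<in> assigns (prefix_vars i j r) (var_bound p e). solvable p i j e r a x \<beta>}"

lemma finite_prefix_vars: "finite (prefix_vars i j r)"
proof -
  have "prefix_vars i j r \<subseteq> {1..r} \<times> {..max i j}" unfolding prefix_vars_def by auto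
  then show ?thesis by (rule finite_subset) simp
qed

lemma finite_row_vars: "finite (row_vars i j r)"
  unfolding row_vars_def by simp

lemma prefix_vars_split:
  assumes "1 \<le> r" "r < i" "i < j"
  shows "prefix_vars i j r = prefix_vars i j (r - 1) \<union> row_vars i j r" "prefix_vars i j (r - 1) \<inter> row_vars i j r = {}"
  using assms unfolding prefix_vars_def row_vars_def by auto

lemma solvable_0: "solvable p i j e 0 a x \<beta>"
  unfolding solvable_def by (rule exI[of _ x]) simp

lemma row_equation_iff_row_rhs:
  assumes "\<forall>s. r < s \<longrightarrow> y s = x s"
  shows "int p ^ e r * y r + (\<Sum>s\<in>{r<..<i}. int p * a r s * y s) = int p ^ 2 * a r i * (a r j - \<beta>)
     \<longleftrightarrow> int p ^ e r * y r = row_rhs p i j a x \<beta> r"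
proof -
  have "(\<Sum>s\<in>{r<..<i}. int p * a r s * y s) = (\<Sum>s\<in>{r<..<i}. int p * a r s * x s)"
    using assms by (intro sum.cong) auto
  then show ?thesis unfolding row_rhs_def by linarith
qed

lemma solvable_step:
  assumes "prime p" "1 \<le> r"
  shows "solvable p i j e r a x \<beta> \<longleftrightarrow> int p ^ e r dvd row_rhs p i j a x \<beta> r \<and>
           solvable p i j e (r - 1) a (x(r := row_rhs p i j a x \<beta> r div int p ^ e r)) \<beta>"
proof -
  let ?T = "row_rhs p i j a x \<beta> r"
  let ?eqs = "\<lambda>y. \<forall>t\<in>{1..r - 1}. int p ^ e t * y t + (\<Sum>s\<in>{t<..<i}. int p * a t s * y s) = int p ^ 2 * a t i * (a t j - \<beta>)"
  have nz: "int p ^ e r \<noteq> 0" using assms(1) by (simp add: prime_gt_0_nat)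
  have ball_split: "(\<forall>t\<in>{1..r}. P t) \<longleftrightarrow> P r \<and> (\<forall>t\<in>{1..r - 1}. P t)" for P
  proof -
    have "{1..r} = insert r {1..r - 1}" using assms(2) by auto
    then show ?thesis by simp
  qed
  have "solvable p i j e r a x \<beta> \<longleftrightarrow> (\<exists>y. (\<forall>s. r < s \<longrightarrow> y s = x s) \<and> int p ^ e r * y r = ?T \<and> ?eqs y)"
    unfolding solvable_def ball_split using row_equation_iff_row_rhs[of r _ x p e a i j \<beta>] by blast
  also have "\<dots> \<longleftrightarrow> int p ^ e r dvd ?T \<and> (\<exists>y. (\<forall>s. r - 1 < s \<longrightarrow> y s = (x(r := ?T div int p ^ e r)) s) \<and> ?eqs y)"
  proof
    assume "\<exists>y. (\<forall>s. r < s \<longrightarrow> y s = x s) \<and> int p ^ e r * y r = ?T \<and> ?eqs y"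
    then obtain y where y: "\<forall>s. r < s \<longrightarrow> y s = x s" "int p ^ e r * y r = ?T" "?eqs y" by blast
    then have "y r = ?T div int p ^ e r" using nz by (metis nonzero_mult_div_cancel_left)
    then have "\<forall>s. r - 1 < s \<longrightarrow> y s = (x(r := ?T div int p ^ e r)) s" using y(1) assms(2) by auto
    moreover have "int p ^ e r dvd ?T" using y(2) by (metis dvd_triv_left)
    ultimately show "int p ^ e r dvd ?T \<and> (\<exists>y. (\<forall>s. r - 1 < s \<longrightarrow> y s = (x(r := ?T div int p ^ e r)) s) \<and> ?eqs y)"
      using y(3) by blast
  next
    assume "int p ^ e r dvd ?T \<and> (\<exists>y. (\<forall>s. r - 1 < s \<longrightarrow> y s = (x(r := ?T div int p ^ e r)) s) \<and> ?eqs y)"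
    then obtain y where y: "int p ^ e r dvd ?T" "\<forall>s. r - 1 < s \<longrightarrow> y s = (x(r := ?T div int p ^ e r)) s" "?eqs y"
      by blast
    then have "y r = ?T div int p ^ e r" "\<forall>s. r < s \<longrightarrow> y s = x s" using assms(2) by auto
    then show "\<exists>y. (\<forall>s. r < s \<longrightarrow> y s = x s) \<and> int p ^ e r * y r = ?T \<and> ?eqs y"
      using y(1,3) by auto
  qed
  also have "\<dots> \<longleftrightarrow> int p ^ e r dvd ?T \<and> solvable p i j e (r - 1) a (x(r := ?T div int p ^ e r)) \<beta>"
    unfolding solvable_def by blast
  finally show ?thesis .
qed

lemma solvable_cong:
  assumes "r < i" "\<And>t s. 1 \<le> t \<Longrightarrow> t \<le> r \<Longrightarrow> (t < s \<and> s \<le> i \<or> s = j) \<Longrightarrow> a t s = a' t s"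
  shows "solvable p i j e r a x \<beta> = solvable p i j e r a' x \<beta>"
proof -
  have "(int p ^ e t * y t + (\<Sum>s\<in>{t<..<i}. int p * a t s * y s) = int p ^ 2 * a t i * (a t j - \<beta>)) =
        (int p ^ e t * y t + (\<Sum>s\<in>{t<..<i}. int p * a' t s * y s) = int p ^ 2 * a' t i * (a' t j - \<beta>))"
    if "t \<in> {1..r}" for t y
  proof -
    have "(\<Sum>s\<in>{t<..<i}. int p * a t s * y s) = (\<Sum>s\<in>{t<..<i}. int p * a' t s * y s)"
      using that assms by (intro sum.cong refl) auto
    moreover have "a t i = a' t i" "a t j = a' t j" using that assms by auto
    ultimately show ?thesis by simp
  qed
  then show ?thesis unfolding solvable_def by (intro ex_cong1 conj_cong refl ball_cong) auto
qed

lemma row_rhs_cong: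
  assumes "\<And>s. (r < s \<and> s \<le> i \<or> s = j) \<Longrightarrow> a r s = a' r s" "r < i"
  shows "row_rhs p i j a x \<beta> r = row_rhs p i j a' x \<beta> r"
proof -
  have "(\<Sum>s\<in>{r<..<i}. int p * a r s * x s) = (\<Sum>s\<in>{r<..<i}. int p * a' r s * x s)"
    using assms by (intro sum.cong refl) auto
  moreover have "a r i = a' r i" "a r j = a' r j" using assms by auto
  ultimately show ?thesis unfolding row_rhs_def by simp
qed

lemma solvable_add_row_iff:
  assumes p: "prime p" and r: "1 \<le> r" "r < i"
    and a1: "a1 \<in> assigns (prefix_vars i j (r - 1)) bd" and f: "f \<in> assigns (row_vars i j r) bd"
  shows "solvable p i j e r (a1 + f) x \<beta> \<longleftrightarrow> int p ^ e r dvd row_rhs p i j f x \<beta> r \<and>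
           solvable p i j e (r - 1) a1 (x(r := row_rhs p i j f x \<beta> r div int p ^ e r)) \<beta>"
proof -
  have "row_rhs p i j (a1 + f) x \<beta> r = row_rhs p i j f x \<beta> r"
  proof (rule row_rhs_cong[OF _ r(2)])
    fix s assume "r < s \<and> s \<le> i \<or> s = j"
    have "(r, s) \<notin> prefix_vars i j (r - 1)" unfolding prefix_vars_def by auto
    then show "(a1 + f) r s = f r s" using assigns_outside[OF a1] by simp
  qed
  moreover have "solvable p i j e (r - 1) (a1 + f) x' \<beta> = solvable p i j e (r - 1) a1 x' \<beta>" for x'
  proof (rule solvable_cong)
    show "r - 1 < i" using r by simp
    fix t s assume "1 \<le> t" "t \<le> r - 1"
    then have "(t, s) \<notin> row_vars i j r" unfolding row_vars_def using r by auto
    then show "(a1 + f) t s = a1 t s" using assigns_outside[OF f] by simp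
  qed
  ultimately show ?thesis using solvable_step[OF p r(1), of i j e "a1 + f" x \<beta>] by simp
qed

lemma solvable_count_step:
  assumes p: "prime p" and r: "1 \<le> r" "r < i" and ij: "i < j"
  shows "(of_nat (solvable_count p i j e r x \<beta>) :: rat) = (\<Sum>f\<in>assigns (row_vars i j r) (var_bound p e).
            if int p ^ e r dvd row_rhs p i j f x \<beta> r
            then of_nat (solvable_count p i j e (r - 1) (x(r := row_rhs p i j f x \<beta> r div int p ^ e r)) \<beta>) else 0)"
proof -
  let ?bd = "var_bound p e" and ?A = "assigns (prefix_vars i j (r - 1)) (var_bound p e)"
  have split: "prefix_vars i j r = prefix_vars i j (r - 1) \<union> row_vars i j r" "prefix_vars i j (r - 1) \<inter> row_vars i j r = {}"
    using prefix_vars_split[OF r ij] by auto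
  have "(of_nat (solvable_count p i j e r x \<beta>) :: rat) = (\<Sum>a\<in>assigns (prefix_vars i j r) ?bd. of_bool (solvable p i j e r a x \<beta>))"
    unfolding solvable_count_def by (rule card_filter_sum[OF finite_assigns[OF finite_prefix_vars]])
  also have "\<dots> = (\<Sum>a1\<in>?A. \<Sum>f\<in>assigns (row_vars i j r) ?bd. of_bool (solvable p i j e r (a1 + f) x \<beta>))"
    unfolding split(1) by (rule sum_assigns_Un[OF split(2)])
  also have "\<dots> = (\<Sum>f\<in>assigns (row_vars i j r) ?bd. \<Sum>a1\<in>?A. of_bool (solvable p i j e r (a1 + f) x \<beta>))"
    by (rule sum.swap)
  also have "\<dots> = (\<Sum>f\<in>assigns (row_vars i j r) ?bd. if int p ^ e r dvd row_rhs p i j f x \<beta> r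
      then \<Sum>a1\<in>?A. of_bool (solvable p i j e (r - 1) a1 (x(r := row_rhs p i j f x \<beta> r div int p ^ e r)) \<beta>) else 0)"
    by (intro sum.cong refl) (simp add: solvable_add_row_iff[OF p r])
  also have "\<dots> = (\<Sum>f\<in>assigns (row_vars i j r) ?bd. if int p ^ e r dvd row_rhs p i j f x \<beta> r
      then of_nat (solvable_count p i j e (r - 1) (x(r := row_rhs p i j f x \<beta> r div int p ^ e r)) \<beta>) else 0)"
    unfolding solvable_count_def by (simp only: card_filter_sum[OF finite_assigns[OF finite_prefix_vars]])
  finally show ?thesis .
qed

text \<open>
  \<open>capval p C (\<beta> mod p\<^sup>g - \<beta>)\<close> is the position of the first nonzero base-\<open>p\<close> digit of \<open>\<beta>\<close>
  at or above position \<open>g\<close> (\<open>capval_mod_diff_eq_iff_digits\<close>).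
\<close>

definition beta_profile :: "nat \<Rightarrow> nat \<Rightarrow> (nat \<Rightarrow> nat) \<Rightarrow> int \<Rightarrow> (nat \<Rightarrow> nat)" where
  "beta_profile p i e \<beta> = (\<lambda>t\<in>{1..i - 1}. capval p (exp_sum e i + 1) (\<beta> mod int p ^ (e t - 1) - \<beta>))"

lemma sum_if_regroup:
  assumes "finite S" "finite W" "\<And>f. f \<in> S \<Longrightarrow> D f \<Longrightarrow> \<phi> f \<in> W"
  shows "(\<Sum>f\<in>S. if D f then h (\<phi> f) else 0) = (\<Sum>w\<in>W. of_nat (card {f\<in>S. D f \<and> \<phi> f = w}) * (h w :: rat))"
proof -
  have "(\<Sum>f\<in>S. if D f then h (\<phi> f) else 0) = (\<Sum>f\<in>{f\<in>S. D f}. h (\<phi> f))"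
    using sum.inter_filter[OF assms(1), of "\<lambda>f. h (\<phi> f)" D] by simp
  also have "\<dots> = (\<Sum>w\<in>W. of_nat (card {f\<in>{f\<in>S. D f}. \<phi> f = w}) * h w)"
    by (rule sum_group_card) (use assms in auto)
  also have "\<dots> = (\<Sum>w\<in>W. of_nat (card {f\<in>S. D f \<and> \<phi> f = w}) * h w)"
    by (intro sum.cong refl) (simp add: conj_assoc)
  finally show ?thesis .
qed

lemma solvable_count_0: "solvable_count p i j e 0 x \<beta> = 1"
proof -
  have "prefix_vars i j 0 = {}" unfolding prefix_vars_def by auto
  then show ?thesis unfolding solvable_count_def by (simp add: assigns_empty solvable_0)
qed

lemma solvable_count_regroup:
  fixes G :: "nat \<Rightarrow> rat"
  assumes p: "prime p" and r: "1 \<le> r" "r < i" and ij: "i < j" and er: "0 < e r"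
    and G: "\<And>x'. of_nat (solvable_count p i j e (r - 1) x' \<beta>) = G (tail_val p i e (r - 1) x')"
  shows "of_nat (solvable_count p i j e r x \<beta>)
       = (\<Sum>s'\<le>exp_sum e (r - 1). row_weight p i e r (tail_val p i e r x) (beta_profile p i e \<beta> r) s' * G s')"
proof -
  let ?R = "assigns (row_vars i j r) (var_bound p e)"
  let ?D = "\<lambda>f. int p ^ e r dvd row_rhs p i j f x \<beta> r"
  let ?x' = "\<lambda>f. x(r := row_rhs p i j f x \<beta> r div int p ^ e r)"
  have profile: "beta_profile p i e \<beta> r = capval p (exp_sum e i + 1) (\<beta> mod int p ^ (e r - 1) - \<beta>)"
  proof -
    have "r \<in> {1..i - 1}" using r by auto
    then show ?thesis unfolding beta_profile_def by simp
  qed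
  have "(of_nat (solvable_count p i j e r x \<beta>) :: rat)
      = (\<Sum>f\<in>?R. if ?D f then of_nat (solvable_count p i j e (r - 1) (?x' f) \<beta>) else 0)"
    by (rule solvable_count_step[OF p r ij])
  also have "\<dots> = (\<Sum>f\<in>?R. if ?D f then G (tail_val p i e (r - 1) (?x' f)) else 0)"
    by (simp only: G)
  also have "\<dots> = (\<Sum>s'\<le>exp_sum e (r - 1). of_nat (card {f\<in>?R. ?D f \<and> tail_val p i e (r - 1) (?x' f) = s'}) * G s')"
    by (rule sum_if_regroup) (auto intro: finite_assigns finite_row_vars tail_val_le)
  also have "\<dots> = (\<Sum>s'\<le>exp_sum e (r - 1). row_weight p i e r (tail_val p i e r x) (beta_profile p i e \<beta> r) s' * G s')"
    by (simp only: card_row_step[where e=e and r=r, OF p r ij er] profile)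
  finally show ?thesis .
qed

lemma solvable_count_poly:
  assumes ij: "i < j" and epos: "\<forall>t\<in>{1..i - 1}. 0 < e t"
  shows "r < i \<Longrightarrow> \<exists>Q. \<forall>p x \<beta>. prime p \<longrightarrow>
            (of_nat (solvable_count p i j e r x \<beta>) :: rat) = poly (Q (tail_val p i e r x) (beta_profile p i e \<beta>)) (of_nat p)"
proof (induction r)
  case 0
  show ?case by (rule exI[of _ "\<lambda>_ _. [:1:]"]) (simp add: solvable_count_0)
next
  case (Suc r)
  obtain Q' where Q': "\<And>p x \<beta>. prime p \<Longrightarrow>
      (of_nat (solvable_count p i j e r x \<beta>) :: rat) = poly (Q' (tail_val p i e r x) (beta_profile p i e \<beta>)) (of_nat p)"
    using Suc by auto
  obtain R where R: "\<And>z p. prime p \<Longrightarrow>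
      row_weight p i e (Suc r) (fst z) (fst (snd z)) (snd (snd z)) = poly (R z) (of_nat p)"
    using poly_on_primes_choice[of "\<lambda>z p. row_weight p i e (Suc r) (fst z) (fst (snd z)) (snd (snd z))"]
      poly_on_primes_row_weight by blast
  define Q where "Q \<mu> \<nu> = (\<Sum>s'\<le>exp_sum e r. R (\<mu>, \<nu> (Suc r), s') * Q' s' \<nu>)" for \<mu> \<nu>
  show ?case
  proof (rule exI[of _ Q], intro allI impI)
    fix p :: nat and x :: "nat \<Rightarrow> int" and \<beta> :: int assume p: "prime p"
    have r: "1 \<le> Suc r" "Suc r < i" "0 < e (Suc r)" using Suc epos by auto
    show "(of_nat (solvable_count p i j e (Suc r) x \<beta>) :: rat)
        = poly (Q (tail_val p i e (Suc r) x) (beta_profile p i e \<beta>)) (of_nat p)"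
      using solvable_count_regroup[where e=e and r="Suc r", OF p r(1,2) ij r(3), of \<beta> "\<lambda>s'. poly (Q' s' (beta_profile p i e \<beta>)) (of_nat p)"]
      by (simp add: Q' p Q_def poly_sum R[OF p, symmetric])
  qed
qed

definition digit :: "nat \<Rightarrow> nat \<Rightarrow> int \<Rightarrow> int" where
  "digit p q \<beta> = (\<beta> div int p ^ q) mod int p"

lemma digit_0: "digit p 0 \<beta> = \<beta> mod int p"
  by (simp add: digit_def)

lemma digit_Suc: "digit p (Suc q) \<beta> = digit p q (\<beta> div int p)"
  by (simp add: digit_def zdiv_zmult2_eq)

lemma digit_shift: "digit p (q + g) \<beta> = digit p q (\<beta> div int p ^ g)"
  by (induction g arbitrary: \<beta>) (simp_all add: digit_Suc zdiv_zmult2_eq)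

lemma pow_dvd_digits:
  assumes "prime p"
  shows "int p ^ n dvd \<beta> \<longleftrightarrow> (\<forall>q<n. digit p q \<beta> = 0)"
proof (induction n arbitrary: \<beta>)
  case 0
  then show ?case by simp
next
  case (Suc n)
  have pp: "0 < int p" using assms by (simp add: prime_gt_0_nat)
  show ?case
  proof (cases "int p ^ n dvd \<beta>")
    case True
    then obtain t where t: "\<beta> = int p ^ n * t" by (metis dvdE)
    have "digit p n \<beta> = t mod int p" unfolding digit_def t using pp by simp
    moreover have "int p ^ Suc n dvd \<beta> \<longleftrightarrow> int p dvd t"
      unfolding t using pp by (simp add: mult.commute)
    ultimately show ?thesis using Suc.IH[of \<beta>] True by (auto simp: less_Suc_eq dvd_eq_mod_eq_0)
  next
    case False
    then have "\<not> int p ^ Suc n dvd \<beta>" using dvd_trans le_imp_power_dvd[of n "Suc n" "int p"] by auto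
    then show ?thesis using Suc.IH[of \<beta>] False less_SucI by blast
  qed
qed

lemma pow_dvd_digits_high:
  assumes "prime p"
  shows "int p ^ m dvd (\<beta> mod int p ^ g - \<beta>) \<longleftrightarrow> (\<forall>d. g \<le> d \<and> d < m \<longrightarrow> digit p d \<beta> = 0)"
proof -
  have pg: "0 < int p ^ g" using assms by (simp add: prime_gt_0_nat)
  have z: "\<beta> mod int p ^ g - \<beta> = - (int p ^ g * (\<beta> div int p ^ g))"
    by (simp add: minus_mod_eq_mult_div[symmetric])
  show ?thesis
  proof (cases "m \<le> g")
    case True
    have "int p ^ m dvd int p ^ g" using True by (rule le_imp_power_dvd)
    then show ?thesis unfolding z using True by auto
  next
    case False
    then have m: "m = (m - g) + g" by simp
    have "int p ^ m dvd (\<beta> mod int p ^ g - \<beta>) \<longleftrightarrow> int p ^ (m - g) dvd (\<beta> div int p ^ g)"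
      unfolding z dvd_minus_iff using pg assms by (subst m) (simp add: power_add mult.commute prime_gt_0_nat)
    also have "\<dots> \<longleftrightarrow> (\<forall>q<m - g. digit p q (\<beta> div int p ^ g) = 0)" by (rule pow_dvd_digits[OF assms])
    also have "\<dots> \<longleftrightarrow> (\<forall>d. g \<le> d \<and> d < m \<longrightarrow> digit p d \<beta> = 0)"
    proof
      assume h: "\<forall>q<m - g. digit p q (\<beta> div int p ^ g) = 0"
      show "\<forall>d. g \<le> d \<and> d < m \<longrightarrow> digit p d \<beta> = 0"
      proof (intro allI impI)
        fix d assume "g \<le> d \<and> d < m"
        then have "d - g < m - g" "d - g + g = d" by auto
        then show "digit p d \<beta> = 0" using h[rule_format, of "d - g"] digit_shift[of p "d - g" g \<beta>] by simp
      qed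
    next
      assume h: "\<forall>d. g \<le> d \<and> d < m \<longrightarrow> digit p d \<beta> = 0"
      show "\<forall>q<m - g. digit p q (\<beta> div int p ^ g) = 0"
        using h digit_shift[of p _ g \<beta>] by (metis add.commute le_add1 less_diff_conv)
    qed
    finally show ?thesis .
  qed
qed

lemma capval_mod_diff_eq_iff_digits:
  assumes "prime p"
  shows "capval p C (\<beta> mod int p ^ g - \<beta>) = v \<longleftrightarrow>
         v \<le> C \<and> (\<forall>d. g \<le> d \<and> d < v \<longrightarrow> digit p d \<beta> = 0) \<and> (v < C \<longrightarrow> g \<le> v \<and> digit p v \<beta> \<noteq> 0)"
  unfolding capval_eq_iff pow_dvd_digits_high[OF assms] by (auto simp: less_Suc_eq)

definition digit_pattern :: "(nat set) \<Rightarrow> (nat set) \<Rightarrow> nat \<Rightarrow> int \<Rightarrow> bool" where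
  "digit_pattern Z NZ p \<beta> \<longleftrightarrow> (\<forall>d\<in>Z. digit p d \<beta> = 0) \<and> (\<forall>d\<in>NZ. digit p d \<beta> \<noteq> 0)"

lemma digit_pattern_split:
  "digit_pattern Z NZ p \<beta> \<longleftrightarrow> ((0 \<in> Z \<longrightarrow> \<beta> mod int p = 0) \<and> (0 \<in> NZ \<longrightarrow> \<beta> mod int p \<noteq> 0)) \<and>
      digit_pattern {q. Suc q \<in> Z} {q. Suc q \<in> NZ} p (\<beta> div int p)"
proof -
  have a: "(\<forall>d\<in>Z. P d) \<longleftrightarrow> (0 \<in> Z \<longrightarrow> P 0) \<and> (\<forall>q\<in>{q. Suc q \<in> Z}. P (Suc q))" for P :: "nat \<Rightarrow> bool" and Z
    by (metis mem_Collect_eq not0_implies_Suc)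
  show ?thesis unfolding digit_pattern_def a[of Z] a[of NZ] by (auto simp: digit_0 digit_Suc)
qed

lemma card_digit_choices:
  assumes "prime p"
  shows "card {d\<in>{0..<int p}. (0 \<in> Z \<longrightarrow> d = 0) \<and> (0 \<in> NZ \<longrightarrow> d \<noteq> 0)} =
         (if 0 \<in> Z \<and> 0 \<in> NZ then 0 else if 0 \<in> Z then 1 else if 0 \<in> NZ then p - 1 else p)"
proof -
  have pp: "0 < int p" using assms by (simp add: prime_gt_0_nat)
  consider "0 \<in> Z \<and> 0 \<in> NZ" | "0 \<in> Z \<and> 0 \<notin> NZ" | "0 \<notin> Z \<and> 0 \<in> NZ" | "0 \<notin> Z \<and> 0 \<notin> NZ" by blast
  then show ?thesis
  proof cases
    case 1 then show ?thesis by simp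
  next
    case 2
    then have "{d\<in>{0..<int p}. (0 \<in> Z \<longrightarrow> d = 0) \<and> (0 \<in> NZ \<longrightarrow> d \<noteq> 0)} = {0}" using pp by auto
    then show ?thesis using 2 by simp
  next
    case 3
    then have "{d\<in>{0..<int p}. (0 \<in> Z \<longrightarrow> d = 0) \<and> (0 \<in> NZ \<longrightarrow> d \<noteq> 0)} = {1..<int p}" by auto
    then show ?thesis using 3 by simp
  next
    case 4
    then have "{d\<in>{0..<int p}. (0 \<in> Z \<longrightarrow> d = 0) \<and> (0 \<in> NZ \<longrightarrow> d \<noteq> 0)} = {0..<int p}" by auto
    then show ?thesis using 4 by simp
  qed
qed

lemma card_mod_div_filter:
  fixes m N :: int
  assumes "0 < m"
  shows "card {\<beta>\<in>{0..<m * N}. P (\<beta> mod m) \<and> Q (\<beta> div m)} = card {d\<in>{0..<m}. P d} * card {b\<in>{0..<N}. Q b}"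
proof -
  have div_less: "\<beta> div m < N" if "\<beta> < m * N" for \<beta>
  proof -
    have "\<beta> div m * m + \<beta> mod m = \<beta>" by (rule div_mult_mod_eq)
    moreover have "0 \<le> \<beta> mod m" using assms by simp
    ultimately have "m * (\<beta> div m) \<le> \<beta>" by (simp only: mult.commute[of m])
    then have "m * (\<beta> div m) < m * N" using that by (rule le_less_trans)
    then show ?thesis using mult_less_cancel_left_pos[OF assms] by blast
  qed
  have combine: "d + m * b \<in> {0..<m * N} \<and> (d + m * b) mod m = d \<and> (d + m * b) div m = b"
    if "d \<in> {0..<m}" "b \<in> {0..<N}" for d b
  proof -
    have "d + m * b < m * (b + 1)" using that by (simp add: algebra_simps)
    also have "\<dots> \<le> m * N" using that assms by (intro mult_left_mono) auto
    finally show ?thesis using that assms by simp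
  qed
  have "bij_betw (\<lambda>\<beta>. (\<beta> mod m, \<beta> div m)) {\<beta>\<in>{0..<m * N}. P (\<beta> mod m) \<and> Q (\<beta> div m)}
      ({d\<in>{0..<m}. P d} \<times> {b\<in>{0..<N}. Q b})"
  proof (rule bij_betw_byWitness[where f'="\<lambda>(d, b). d + m * b"])
    show "(\<lambda>\<beta>. (\<beta> mod m, \<beta> div m)) ` {\<beta>\<in>{0..<m * N}. P (\<beta> mod m) \<and> Q (\<beta> div m)}
        \<subseteq> {d\<in>{0..<m}. P d} \<times> {b\<in>{0..<N}. Q b}"
      using assms div_less by (auto simp: pos_imp_zdiv_nonneg_iff)
    show "(\<lambda>(d, b). d + m * b) ` ({d\<in>{0..<m}. P d} \<times> {b\<in>{0..<N}. Q b})
        \<subseteq> {\<beta>\<in>{0..<m * N}. P (\<beta> mod m) \<and> Q (\<beta> div m)}"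
    proof
      fix \<beta> assume "\<beta> \<in> (\<lambda>(d, b). d + m * b) ` ({d\<in>{0..<m}. P d} \<times> {b\<in>{0..<N}. Q b})"
      then obtain d b where "d \<in> {0..<m}" "P d" "b \<in> {0..<N}" "Q b" "\<beta> = d + m * b" by auto
      with combine[of d b] show "\<beta> \<in> {\<beta>\<in>{0..<m * N}. P (\<beta> mod m) \<and> Q (\<beta> div m)}" by simp
    qed
  qed (use combine in auto)
  then show ?thesis by (simp add: bij_betw_same_card card_cartesian_product)
qed
lemma card_digit_pattern_Suc:
  assumes "prime p"
  shows "card {\<beta>\<in>{0..<int p ^ Suc E}. digit_pattern Z NZ p \<beta>} =
         card {d\<in>{0..<int p}. (0 \<in> Z \<longrightarrow> d = 0) \<and> (0 \<in> NZ \<longrightarrow> d \<noteq> 0)} *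
         card {\<beta>\<in>{0..<int p ^ E}. digit_pattern {q. Suc q \<in> Z} {q. Suc q \<in> NZ} p \<beta>}"
proof -
  have "int p ^ Suc E = int p * int p ^ E" by simp
  then show ?thesis
    unfolding digit_pattern_split[of Z NZ p]
    by (simp only:) (rule card_mod_div_filter, use assms in \<open>simp add: prime_gt_0_nat\<close>)
qed

lemma poly_on_primes_card_digit_pattern: "poly_on_primes (\<lambda>p. of_nat (card {\<beta>\<in>{0..<int p ^ E}. digit_pattern Z NZ p \<beta>}))"
proof (induction E arbitrary: Z NZ)
  case 0
  have pf: "poly_on_primes (\<lambda>p. if NZ = {} then 1 else 0)" by (rule poly_on_primes_if) (rule poly_on_primes_const)+
  have eq: "(of_nat (card {\<beta>\<in>{0..<int p ^ 0}. digit_pattern Z NZ p \<beta>}) :: rat) = (if NZ = {} then 1 else 0)" for p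
  proof -
    have e: "{0..<int p ^ 0} = {0::int}" by auto
    have "digit_pattern Z NZ p 0 \<longleftrightarrow> NZ = {}" by (auto simp: digit_pattern_def digit_def)
    then have "{\<beta>\<in>{0..<int p ^ 0}. digit_pattern Z NZ p \<beta>} = (if NZ = {} then {0} else {})"
      unfolding e by auto
    then show ?thesis by simp
  qed
  show ?case by (rule poly_on_primes_cong[OF pf]) (rule eq[symmetric])
next
  case (Suc E)
  let ?c = "\<lambda>p. (if 0 \<in> Z \<and> 0 \<in> NZ then 0 else if 0 \<in> Z then 1 else if 0 \<in> NZ then of_nat p - 1 else of_nat p) :: rat"
  have "poly_on_primes ?c" by (intro poly_on_primes_if poly_on_primes_const poly_on_primes_id poly_on_primes_diff)
  then have "poly_on_primes (\<lambda>p. ?c p * of_nat (card {\<beta>\<in>{0..<int p ^ E}. digit_pattern {q. Suc q \<in> Z} {q. Suc q \<in> NZ} p \<beta>}))"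
    using Suc.IH by (rule poly_on_primes_mult)
  then show ?case
  proof (rule poly_on_primes_cong)
    fix p :: nat assume p: "prime p"
    have "p \<ge> 1" using prime_ge_1_nat[OF p] by simp
    then have "of_nat (card {d\<in>{0..<int p}. (0 \<in> Z \<longrightarrow> d = 0) \<and> (0 \<in> NZ \<longrightarrow> d \<noteq> 0)}) = ?c p"
      unfolding card_digit_choices[OF p] by (simp add: of_nat_diff)
    then show "?c p * of_nat (card {\<beta>\<in>{0..<int p ^ E}. digit_pattern {q. Suc q \<in> Z} {q. Suc q \<in> NZ} p \<beta>})
         = of_nat (card {\<beta>\<in>{0..<int p ^ Suc E}. digit_pattern Z NZ p \<beta>})"
      unfolding card_digit_pattern_Suc[OF p] by simp
  qed
qed

lemma restrict_eq_iff: "\<nu> \<in> extensional A \<Longrightarrow> (restrict f A = \<nu> \<longleftrightarrow> (\<forall>x\<in>A. f x = \<nu> x))"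
  by (auto simp: fun_eq_iff extensional_def restrict_def)

lemma poly_on_primes_card_profile:
  assumes "\<nu> \<in> PiE {1..i - 1} (\<lambda>_. {0..exp_sum e i + 1})"
  shows "poly_on_primes (\<lambda>p. of_nat (card {\<beta>\<in>{0..<int p ^ G}. beta_profile p i e \<beta> = \<nu>}))"
proof -
  define C where "C = exp_sum e i + 1"
  define K where "K = {1..i - 1}"
  define Feas where "Feas = (\<forall>t\<in>K. \<nu> t < C \<longrightarrow> e t - 1 \<le> \<nu> t)"
  define Zv where "Zv = {d. \<exists>t\<in>K. e t - 1 \<le> d \<and> d < \<nu> t}"
  define NZv where "NZv = {d. \<exists>t\<in>K. \<nu> t < C \<and> d = \<nu> t}"
  have le: "\<forall>t\<in>K. \<nu> t \<le> C" using assms unfolding K_def C_def by (auto simp: PiE_iff)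
  have ext: "\<nu> \<in> extensional K" using assms unfolding K_def by (simp add: PiE_iff)
  have pf: "poly_on_primes (\<lambda>p. if Feas then of_nat (card {\<beta>\<in>{0..<int p ^ G}. digit_pattern Zv NZv p \<beta>}) else 0)"
    by (intro poly_on_primes_if poly_on_primes_card_digit_pattern poly_on_primes_const)
  show ?thesis
  proof (rule poly_on_primes_cong[OF pf])
    fix p :: nat assume p: "prime p"
    have eq: "beta_profile p i e \<beta> = \<nu> \<longleftrightarrow> Feas \<and> digit_pattern Zv NZv p \<beta>" for \<beta>
    proof -
      have "beta_profile p i e \<beta> = \<nu> \<longleftrightarrow> (\<forall>t\<in>K. capval p C (\<beta> mod int p ^ (e t - 1) - \<beta>) = \<nu> t)"
        unfolding beta_profile_def K_def[symmetric] C_def[symmetric] by (rule restrict_eq_iff[OF ext])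
      also have "\<dots> \<longleftrightarrow> (\<forall>t\<in>K. (\<forall>d. e t - 1 \<le> d \<and> d < \<nu> t \<longrightarrow> digit p d \<beta> = 0) \<and>
                               (\<nu> t < C \<longrightarrow> e t - 1 \<le> \<nu> t \<and> digit p (\<nu> t) \<beta> \<noteq> 0))"
        using capval_mod_diff_eq_iff_digits[OF p] le by auto
      also have "\<dots> \<longleftrightarrow> Feas \<and> digit_pattern Zv NZv p \<beta>"
        unfolding Feas_def digit_pattern_def Zv_def NZv_def by blast
      finally show ?thesis .
    qed
    show "(if Feas then of_nat (card {\<beta>\<in>{0..<int p ^ G}. digit_pattern Zv NZv p \<beta>}) else 0) =
          of_nat (card {\<beta>\<in>{0..<int p ^ G}. beta_profile p i e \<beta> = \<nu>})"
      unfolding eq by simp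
  qed
qed

lemma poly_on_primes_sum_profile:
  assumes "\<And>p \<beta>. prime p \<Longrightarrow> (of_nat (N p \<beta>) :: rat) = poly (Q (beta_profile p i e \<beta>)) (of_nat p)"
  shows "poly_on_primes (\<lambda>p. \<Sum>\<beta>\<in>{0..<int p ^ G}. of_nat (N p \<beta>))"
proof -
  let ?V = "PiE {1..i - 1} (\<lambda>_. {0..exp_sum e i + 1})"
  have finV: "finite ?V" by (intro finite_PiE) auto
  have pf: "poly_on_primes (\<lambda>p. \<Sum>\<nu>\<in>?V. of_nat (card {\<beta>\<in>{0..<int p ^ G}. beta_profile p i e \<beta> = \<nu>}) * poly (Q \<nu>) (of_nat p))"
  proof (rule poly_on_primes_sum[OF finV])
    fix \<nu> assume "\<nu> \<in> ?V"
    then show "poly_on_primes (\<lambda>p. of_nat (card {\<beta>\<in>{0..<int p ^ G}. beta_profile p i e \<beta> = \<nu>}) * poly (Q \<nu>) (of_nat p))"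
      by (intro poly_on_primes_mult poly_on_primes_card_profile) (auto simp: poly_on_primes_def)
  qed
  show ?thesis
  proof (rule poly_on_primes_cong[OF pf])
    fix p :: nat assume p: "prime p"
    have "(\<Sum>\<beta>\<in>{0..<int p ^ G}. of_nat (N p \<beta>) :: rat) = (\<Sum>\<beta>\<in>{0..<int p ^ G}. (\<lambda>\<nu>. poly (Q \<nu>) (of_nat p)) (beta_profile p i e \<beta>))"
      using assms[OF p] by simp
    also have "\<dots> = (\<Sum>\<nu>\<in>?V. of_nat (card {\<beta>\<in>{0..<int p ^ G}. beta_profile p i e \<beta> = \<nu>}) * poly (Q \<nu>) (of_nat p))"
    proof (rule sum_group_card)
      show "beta_profile p i e ` {0..<int p ^ G} \<subseteq> ?V"
        unfolding beta_profile_def by (auto simp: capval_le)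
    qed (use finV in auto)
    finally show "(\<Sum>\<nu>\<in>?V. of_nat (card {\<beta>\<in>{0..<int p ^ G}. beta_profile p i e \<beta> = \<nu>}) * poly (Q \<nu>) (of_nat p)) =
                  (\<Sum>\<beta>\<in>{0..<int p ^ G}. of_nat (N p \<beta>))" by simp
  qed
qed

lemma sum_upper_triangular_row:
  fixes M :: "nat \<Rightarrow> nat \<Rightarrow> 'a::comm_semiring_1"
  assumes "\<And>s. s < t \<Longrightarrow> M t s = 0" "\<And>s. k < s \<Longrightarrow> s \<le> n \<Longrightarrow> x s = 0" "1 \<le> t" "k \<le> n"
  shows "(\<Sum>s=1..n. M t s * x s) = (\<Sum>s=t..k. M t s * x s)"
proof (rule sum.mono_neutral_right)
  show "\<forall>s\<in>{1..n} - {t..k}. M t s * x s = 0"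
    using assms(1,2) by fastforce
qed (use assms(3,4) in auto)

lemma upper_triangular_solution_vanishes:
  fixes M :: "nat \<Rightarrow> nat \<Rightarrow> 'a::idom"
  assumes lower: "\<And>r s. s < r \<Longrightarrow> r \<le> n \<Longrightarrow> M r s = 0"
    and diag: "\<And>r. r \<in> {1..n} \<Longrightarrow> M r r \<noteq> 0"
    and sol: "\<forall>r\<in>{1..n}. w r = (\<Sum>s=1..n. M r s * x s)"
    and w0: "\<And>r. i < r \<Longrightarrow> w r = 0"
  shows "i < s \<Longrightarrow> s \<le> n \<Longrightarrow> x s = 0"
proof (induction "n - s" arbitrary: s rule: less_induct)
  case less
  have "(\<Sum>s'=1..n. M s s' * x s') = (\<Sum>s'=s..s. M s s' * x s')"
    using less by (intro sum_upper_triangular_row lower) auto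
  moreover have "s \<in> {1..n}" "w s = 0" using w0 less.prems by auto
  ultimately have "M s s * x s = 0" using sol by auto
  then show ?case using diag less.prems by auto
qed

lemma upper_triangular_solvable_iff:
  fixes M :: "nat \<Rightarrow> nat \<Rightarrow> 'a::idom"
  assumes lower: "\<And>r s. s < r \<Longrightarrow> r \<le> n \<Longrightarrow> M r s = 0"
    and diag: "\<And>r. r \<in> {1..n} \<Longrightarrow> M r r \<noteq> 0"
    and "i \<le> n" and w0: "\<And>r. i < r \<Longrightarrow> w r = 0"
  shows "(\<exists>x. \<forall>r\<in>{1..n}. w r = (\<Sum>s=1..n. M r s * x s)) \<longleftrightarrow>
         (\<exists>y. \<forall>t\<in>{1..i}. w t = (\<Sum>s=t..i. M t s * y s))"
proof
  assume "\<exists>x. \<forall>r\<in>{1..n}. w r = (\<Sum>s=1..n. M r s * x s)"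
  then obtain x where x: "\<forall>r\<in>{1..n}. w r = (\<Sum>s=1..n. M r s * x s)" by blast
  have "(\<Sum>s=1..n. M t s * x s) = (\<Sum>s=t..i. M t s * x s)" if "t \<in> {1..i}" for t
    using that assms upper_triangular_solution_vanishes[OF lower diag x w0]
    by (intro sum_upper_triangular_row) auto
  then show "\<exists>y. \<forall>t\<in>{1..i}. w t = (\<Sum>s=t..i. M t s * y s)" using x assms(3) by auto
next
  assume "\<exists>y. \<forall>t\<in>{1..i}. w t = (\<Sum>s=t..i. M t s * y s)"
  then obtain y where y: "\<forall>t\<in>{1..i}. w t = (\<Sum>s=t..i. M t s * y s)" by blast
  define x where "x s = (if s \<le> i then y s else 0)" for s
  have "w r = (\<Sum>s=1..n. M r s * x s)" if "r \<in> {1..n}" for r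
  proof -
    have "(\<Sum>s=1..n. M r s * x s) = (\<Sum>s=r..i. M r s * x s)"
      using that assms by (intro sum_upper_triangular_row) (auto simp: x_def)
    also have "\<dots> = (\<Sum>s=r..i. M r s * y s)" by (intro sum.cong) (auto simp: x_def)
    finally show ?thesis using y w0 that by (cases "r \<le> i") auto
  qed
  then show "\<exists>x. \<forall>r\<in>{1..n}. w r = (\<Sum>s=1..n. M r s * x s)" by blast
qed

lemma in_col_span_iff_triangular:
  assumes "i < n" "j < n" "prime p"
  shows "in_col_span n (Amat n p e a) (\<lambda>r. Amat n p e a r i * Amat n p e a r j)
     \<longleftrightarrow> (\<exists>y. \<forall>t\<in>{1..i}. Amat n p e a t i * Amat n p e a t j = (\<Sum>s=t..i. Amat n p e a t s * y s))"
  unfolding in_col_span_def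
  by (rule upper_triangular_solvable_iff) (use assms in \<open>auto simp: Amat_def prime_gt_0_nat\<close>)

lemma Amat_row_sum:
  assumes "t < i" "i < n"
  shows "(\<Sum>s=t..i. Amat n p e a t s * y s)
       = int p ^ e t * y t + (\<Sum>s\<in>{t<..<i}. int p * a t s * y s) + int p * a t i * y i"
proof -
  have "{t..i} = insert t (insert i {t<..<i})" using assms by auto
  moreover have "(\<Sum>s\<in>{t<..<i}. Amat n p e a t s * y s) = (\<Sum>s\<in>{t<..<i}. int p * a t s * y s)"
    using assms by (intro sum.cong) (auto simp: Amat_def)
  ultimately show ?thesis using assms by (simp add: Amat_def algebra_simps)
qed

lemma Amat_last_row_iff:
  assumes "i < j" "j < n" "prime p"
  shows "Amat n p e a i i * Amat n p e a i j = (\<Sum>s=i..i. Amat n p e a i s * y s) \<longleftrightarrow> y i = int p * a i j"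
  using assms by (auto simp: Amat_def prime_gt_0_nat)

lemma Amat_row_iff:
  assumes "t < i" "i < j" "j < n" "y i = int p * a i j"
  shows "Amat n p e a t i * Amat n p e a t j = (\<Sum>s=t..i. Amat n p e a t s * y s) \<longleftrightarrow>
      int p ^ e t * y t + (\<Sum>s\<in>{t<..<i}. int p * a t s * y s) = int p ^ 2 * a t i * (a t j - a i j)"
proof -
  have "Amat n p e a t i * Amat n p e a t j = int p ^ 2 * a t i * (a t j - a i j) + int p * a t i * y i"
    using assms by (simp add: Amat_def algebra_simps power2_eq_square)
  moreover have "i < n" using assms by simp
  ultimately show ?thesis unfolding Amat_row_sum[OF assms(1) \<open>i < n\<close>] by linarith
qed

lemma triangular_iff_solvable:
  assumes "1 \<le> i" "i < j" "j < n" "prime p"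
  shows "(\<exists>y. \<forall>t\<in>{1..i}. Amat n p e a t i * Amat n p e a t j = (\<Sum>s=t..i. Amat n p e a t s * y s))
     \<longleftrightarrow> solvable p i j e (i - 1) a (\<lambda>_. 0) (a i j)"
proof
  assume "\<exists>y. \<forall>t\<in>{1..i}. Amat n p e a t i * Amat n p e a t j = (\<Sum>s=t..i. Amat n p e a t s * y s)"
  then obtain y where y: "\<forall>t\<in>{1..i}. Amat n p e a t i * Amat n p e a t j = (\<Sum>s=t..i. Amat n p e a t s * y s)"
    by blast
  have "Amat n p e a i i * Amat n p e a i j = (\<Sum>s=i..i. Amat n p e a i s * y s)" using y assms(1) by auto
  then have y_i: "y i = int p * a i j" unfolding Amat_last_row_iff[OF assms(2-4)] .
  show "solvable p i j e (i - 1) a (\<lambda>_. 0) (a i j)"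
    unfolding solvable_def
  proof (intro exI[of _ "\<lambda>s. if s < i then y s else 0"] conjI allI impI ballI)
    fix t assume t: "t \<in> {1..i - 1}"
    then have "t < i" by auto
    have "(\<Sum>s\<in>{t<..<i}. int p * a t s * (if s < i then y s else 0)) = (\<Sum>s\<in>{t<..<i}. int p * a t s * y s)"
      by (intro sum.cong) auto
    then show "int p ^ e t * (if t < i then y t else 0) + (\<Sum>s\<in>{t<..<i}. int p * a t s * (if s < i then y s else 0))
        = int p ^ 2 * a t i * (a t j - a i j)"
      using y Amat_row_iff[where y=y and p=p and a=a and e=e, OF \<open>t < i\<close> assms(2,3) y_i] t \<open>t < i\<close> by auto
  qed simp
next
  assume "solvable p i j e (i - 1) a (\<lambda>_. 0) (a i j)"
  then obtain y where y: "\<forall>t\<in>{1..i - 1}.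
      int p ^ e t * y t + (\<Sum>s\<in>{t<..<i}. int p * a t s * y s) = int p ^ 2 * a t i * (a t j - a i j)"
    unfolding solvable_def by blast
  define y' where "y' = y(i := int p * a i j)"
  have "Amat n p e a t i * Amat n p e a t j = (\<Sum>s=t..i. Amat n p e a t s * y' s)" if t: "t \<in> {1..i}" for t
  proof (cases "t = i")
    case True
    then show ?thesis by (simp only: Amat_last_row_iff[OF assms(2-4)]) (simp add: y'_def)
  next
    case False
    then have "t < i" using t by auto
    have "(\<Sum>s\<in>{t<..<i}. int p * a t s * y' s) = (\<Sum>s\<in>{t<..<i}. int p * a t s * y s)"
      by (intro sum.cong) (auto simp: y'_def)
    then show ?thesis
      using Amat_row_iff[where y=y' and p=p and a=a and e=e, OF \<open>t < i\<close> assms(2,3)] y t \<open>t < i\<close> by (auto simp: y'_def)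
  qed
  then show "\<exists>y. \<forall>t\<in>{1..i}. Amat n p e a t i * Amat n p e a t j = (\<Sum>s=t..i. Amat n p e a t s * y s)"
    by blast
qed

lemma full_assign_eq_assigns: "full_assign n p e = assigns {(r, s). 1 \<le> r \<and> r < s \<and> s \<le> n - 1} (var_bound p e)"
  unfolding full_assign_def assigns_def var_bound_def by auto

lemma listed_vars_split:
  assumes "1 \<le> i" "i < j"
  shows "listed_vars i j = prefix_vars i j (i - 1) \<union> {(i, j)}" "prefix_vars i j (i - 1) \<inter> {(i, j)} = {}"
  using assms unfolding listed_vars_def prefix_vars_def by auto

lemma in_col_span_iff_solvable:
  assumes "1 \<le> i" "i < j" "j \<le> n - 1" "n \<ge> 3" "prime p"
  shows "in_col_span n (Amat n p e a) (\<lambda>r. Amat n p e a r i * Amat n p e a r j) \<longleftrightarrow>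
         solvable p i j e (i - 1) a (\<lambda>_. 0) (a i j)"
proof -
  have "i < n" "j < n" using assms by auto
  then show ?thesis
    using in_col_span_iff_triangular[OF _ _ assms(5)] triangular_iff_solvable[OF assms(1,2) _ assms(5)] by simp
qed

lemma solvable_restrict_listed:
  assumes "1 \<le> i" "i < j"
  shows "solvable p i j e (i - 1) (restrict_vars (listed_vars i j) a) (\<lambda>_. 0) (restrict_vars (listed_vars i j) a i j) =
         solvable p i j e (i - 1) a (\<lambda>_. 0) (a i j)"
proof -
  have "restrict_vars (listed_vars i j) a i j = a i j" using assms by (simp add: restrict_vars_def listed_vars_def)
  moreover have "solvable p i j e (i - 1) (restrict_vars (listed_vars i j) a) (\<lambda>_. 0) \<beta> = solvable p i j e (i - 1) a (\<lambda>_. 0) \<beta>" for \<beta>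
    by (rule solvable_cong) (use assms in \<open>auto simp: restrict_vars_def listed_vars_def\<close>)
  ultimately show ?thesis by simp
qed

lemma good_choices_eq_solvable:
  assumes "1 \<le> i" "i < j" "j \<le> n - 1" "n \<ge> 3" "prime p"
  shows "good_choices n i j e p = {b \<in> assigns (listed_vars i j) (var_bound p e). solvable p i j e (i - 1) b (\<lambda>_. 0) (b i j)}"
proof -
  let ?L = "listed_vars i j"
  let ?F = "{(r, s). 1 \<le> r \<and> r < s \<and> s \<le> n - 1}"
  have LF: "?L \<subseteq> ?F" using assms unfolding listed_vars_def by auto
  have c: "in_col_span n (Amat n p e a) (\<lambda>r. Amat n p e a r i * Amat n p e a r j) \<longleftrightarrow>
         solvable p i j e (i - 1) a (\<lambda>_. 0) (a i j)" for a by (rule in_col_span_iff_solvable[OF assms])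
  show ?thesis
  proof (intro set_eqI iffI)
    fix b assume "b \<in> good_choices n i j e p"
    then obtain a where a: "a \<in> assigns ?F (var_bound p e)" "solvable p i j e (i - 1) a (\<lambda>_. 0) (a i j)" "b = restrict_vars ?L a"
      unfolding good_choices_def full_assign_eq_assigns c by blast
    have "b \<in> assigns ?L (var_bound p e)" using a(1,3) restrict_vars_in_assigns LF by blast
    moreover have "solvable p i j e (i - 1) b (\<lambda>_. 0) (b i j)" using a(2,3) solvable_restrict_listed[OF assms(1,2)] by simp
    ultimately show "b \<in> {b \<in> assigns ?L (var_bound p e). solvable p i j e (i - 1) b (\<lambda>_. 0) (b i j)}" by simp
  next
    fix b assume b: "b \<in> {b \<in> assigns ?L (var_bound p e). solvable p i j e (i - 1) b (\<lambda>_. 0) (b i j)}"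
    have "0 < var_bound p e r" for r using assms(5) by (simp add: var_bound_def prime_gt_0_nat)
    then have "b \<in> assigns ?F (var_bound p e)" using assigns_mono[OF LF] b by blast
    moreover have "restrict_vars ?L b = b" using b restrict_vars_id by blast
    ultimately show "b \<in> good_choices n i j e p"
      unfolding good_choices_def full_assign_eq_assigns c using b by (auto intro: image_eqI[of _ _ b])
  qed
qed

lemma finite_listed_vars: "finite (listed_vars i j)"
proof -
  have "listed_vars i j \<subseteq> {..i} \<times> {..max i j}" unfolding listed_vars_def by auto
  then show ?thesis by (rule finite_subset) simp
qed

lemma card_good_choices:
  assumes a: "1 \<le> i" "i < j" "j \<le> n - 1" "n \<ge> 3" "prime p"
  shows "(of_nat (card (good_choices n i j e p)) :: rat)
       = (\<Sum>\<beta>\<in>{0..<int p ^ (e i - 1)}. of_nat (solvable_count p i j e (i - 1) (\<lambda>_. 0) \<beta>))"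
proof -
  let ?bd = "var_bound p e"
  let ?G = "\<lambda>b. solvable p i j e (i - 1) b (\<lambda>_. 0) (b i j)"
  have spl: "listed_vars i j = prefix_vars i j (i - 1) \<union> {(i, j)}" "prefix_vars i j (i - 1) \<inter> {(i, j)} = {}"
    using listed_vars_split[OF a(1,2)] by auto
  have "(of_nat (card (good_choices n i j e p)) :: rat) = (\<Sum>b\<in>assigns (listed_vars i j) ?bd. of_bool (?G b))"
    unfolding good_choices_eq_solvable[OF a] by (rule card_filter_sum[OF finite_assigns[OF finite_listed_vars]])
  also have "\<dots> = (\<Sum>a1\<in>assigns (prefix_vars i j (i - 1)) ?bd. \<Sum>f\<in>assigns {(i, j)} ?bd. of_bool (?G (a1 + f)))"
    unfolding spl(1) by (rule sum_assigns_Un[OF spl(2)])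
  also have "\<dots> = (\<Sum>a1\<in>assigns (prefix_vars i j (i - 1)) ?bd. \<Sum>\<beta>\<in>{0..<?bd i}. of_bool (?G (a1 + single_assign i j \<beta>)))"
    by (intro sum.cong refl sum_assigns_singleton)
  also have "\<dots> = (\<Sum>a1\<in>assigns (prefix_vars i j (i - 1)) ?bd. \<Sum>\<beta>\<in>{0..<?bd i}. of_bool (solvable p i j e (i - 1) a1 (\<lambda>_. 0) \<beta>))"
  proof (intro sum.cong refl)
    fix a1 \<beta> assume a1: "a1 \<in> assigns (prefix_vars i j (i - 1)) ?bd"
    have "(i, j) \<notin> prefix_vars i j (i - 1)" unfolding prefix_vars_def by auto
    then have "(a1 + single_assign i j \<beta>) i j = \<beta>" using assigns_outside[OF a1] by (simp add: single_assign_def)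
    moreover have "solvable p i j e (i - 1) (a1 + single_assign i j \<beta>) (\<lambda>_. 0) \<beta> = solvable p i j e (i - 1) a1 (\<lambda>_. 0) \<beta>"
      by (rule solvable_cong) (use a in \<open>auto simp: single_assign_def\<close>)
    ultimately show "(of_bool (?G (a1 + single_assign i j \<beta>)) :: rat) = of_bool (solvable p i j e (i - 1) a1 (\<lambda>_. 0) \<beta>)"
      by simp
  qed
  also have "\<dots> = (\<Sum>\<beta>\<in>{0..<?bd i}. \<Sum>a1\<in>assigns (prefix_vars i j (i - 1)) ?bd. of_bool (solvable p i j e (i - 1) a1 (\<lambda>_. 0) \<beta>))"
    by (rule sum.swap)
  also have "\<dots> = (\<Sum>\<beta>\<in>{0..<int p ^ (e i - 1)}. of_nat (solvable_count p i j e (i - 1) (\<lambda>_. 0) \<beta>))"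
    unfolding solvable_count_def var_bound_def
    by (intro sum.cong refl card_filter_sum[symmetric] finite_assigns finite_prefix_vars)
  finally show ?thesis .
qed

theorem proposition3p2:
  fixes n i j :: nat and e :: "nat \<Rightarrow> nat"
  assumes "n \<ge> 3" and "1 \<le> i" and "i < j" and "j \<le> n - 1"
    and "\<forall>r\<in>{1..n-1}. e r > 0"
  shows "\<exists>P :: rat poly. \<forall>p :: nat. prime p \<longrightarrow>
           of_nat (card (good_choices n i j e p)) = poly P (of_nat p)"
proof -
  have "\<forall>t\<in>{1..i - 1}. 0 < e t" using assms by auto
  then obtain Q where Q: "\<And>p x \<beta>. prime p \<Longrightarrow> (of_nat (solvable_count p i j e (i - 1) x \<beta>) :: rat)
      = poly (Q (tail_val p i e (i - 1) x) (beta_profile p i e \<beta>)) (of_nat p)"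
    using solvable_count_poly[OF assms(3), of e "i - 1"] assms(2) by auto
  have "poly_on_primes (\<lambda>p. \<Sum>\<beta>\<in>{0..<int p ^ (e i - 1)}. of_nat (solvable_count p i j e (i - 1) (\<lambda>_. 0) \<beta>))"
    by (rule poly_on_primes_sum_profile[where Q="Q (exp_sum e (i - 1))" and i=i and e=e])
      (simp only: Q tail_val_last_row[OF assms(2)])
  then have "poly_on_primes (\<lambda>p. of_nat (card (good_choices n i j e p)))"
    by (rule poly_on_primes_cong) (simp add: card_good_choices[OF assms(2,3,4,1)])
  then show ?thesis unfolding poly_on_primes_def by blast
qed

end
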